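(* Let $G$ be any $d$-regular graph and consider the random matching model. Then for any $K\ge\epsilon>0$, \[ \tau_{\operatorname{cont}}(K,\epsilon) \leq \frac{8}{d \cdot p_{\min}} \cdot \frac{1}{1-\lambda_2(\mathbf{P})}\cdot\log \left( \frac{K n^2}{\epsilon/2} \right). \]
   Context: $G=(V,E)$ is an undirected connected graph with $n$ nodes and maximum degree $\Delta$. A matching $\mathbf{M}^{(t)}\subseteq E$ is identified with the symmetric matrix with $\mathbf{M}^{(t)}_{u,u}=\mathbf{M}^{(t)}_{v,v}=\mathbf{M}^{(t)}_{u,v}=\mathbf{M}^{(t)}_{v,u}=1/2$ for $\{u,v\}\in\mathbf{M}^{(t)}$, $\mathbf{M}^{(t)}_{u,u}=1$ if $u$ is unmatched, other entries $0$. The continuous process is $\xi^{(t)}=\xi^{(t-1)}\mathbf{M}^{(t)}$ (row vectors). Random matching model: in each round a random matching is generated, independently across rounds, and $p_{\min}:=\min_t\min_{\{u,v\}\in E}\Pr[\{u,v\}\in\mathbf{M}^{(t)}]$, with $p_{\min}=\Omega(1/\Delta)$. The discrepancy of $\xi$ is $\max_{u,v}|\xi_u-\xi_v|$. For $t_1<t_2$, the interval $[t_1,t_2]$ (with its matchings $\mathbf{M}^{(t_1+1)},\dots,\mathbf{M}^{(t_2)}$) is $(K,\epsilon)$-smoothing if every $\xi^{(t_1)}\in\mathbb{R}^n$ with discrepancy at most $K$ yields $\xi^{(t_2)}$ with discrepancy at most $\epsilon$. In the random matching model, $\tau_{\operatorname{cont}}(K,\epsilon)$ is the minimum $t\in\mathbb{N}$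 such that $[0,t]$ is $(K,\epsilon)$-smoothing with probability at least $1-n^{-1}$ (over the random matchings). $\mathbf{P}$ is the matrix with $\mathbf{P}_{u,v}=\frac{1}{2\Delta}$ for $\{u,v\}\in E$, $\mathbf{P}_{u,u}=1-\frac{\deg(u)}{2\Delta}$, $0$ otherwise, and $\lambda_2(\mathbf{P})$ is its second largest eigenvalue. *)

theory Defs
  imports "HOL-Probability.Probability" "Jordan_Normal_Form.Char_Poly"
begin

definition edge_set :: "nat \<Rightarrow> (nat \<Rightarrow> nat \<Rightarrow> bool) \<Rightarrow> nat set set" where
  "edge_set n E = {{u, v} | u v. u < n \<and> v < n \<and> E u v}"

definition graph_deg :: "nat \<Rightarrow> (nat \<Rightarrow> nat \<Rightarrow> bool) \<Rightarrow> nat \<Rightarrow> nat" where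
  "graph_deg n E u = card {v. v < n \<and> E u v}"

definition max_deg :: "nat \<Rightarrow> (nat \<Rightarrow> nat \<Rightarrow> bool) \<Rightarrow> nat" where
  "max_deg n E = Max (graph_deg n E ` {..<n})"

definition simple_graph :: "nat \<Rightarrow> (nat \<Rightarrow> nat \<Rightarrow> bool) \<Rightarrow> bool" where
  "simple_graph n E \<longleftrightarrow> (\<forall>u v. E u v \<longrightarrow> u < n \<and> v < n \<and> u \<noteq> v \<and> E v u)"

definition connected_graph :: "nat \<Rightarrow> (nat \<Rightarrow> nat \<Rightarrow> bool) \<Rightarrow> bool" where
  "connected_graph n E \<longleftrightarrow> 0 < n \<and> (\<forall>u v. u < n \<longrightarrow> v < n \<longrightarrow> E\<^sup>*\<^sup>* u v)"

definition regular_graph :: "nat \<Rightarrow> (nat \<Rightarrow> nat \<Rightarrow> bool) \<Rightarrow> nat \<Rightarrow> bool" where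
  "regular_graph n E d \<longleftrightarrow> (\<forall>u<n. graph_deg n E u = d)"

definition is_matching :: "nat \<Rightarrow> (nat \<Rightarrow> nat \<Rightarrow> bool) \<Rightarrow> nat set set \<Rightarrow> bool" where
  "is_matching n E M \<longleftrightarrow> M \<subseteq> edge_set n E \<and>
     (\<forall>e\<in>M. \<forall>e'\<in>M. e \<noteq> e' \<longrightarrow> e \<inter> e' = {})"

definition matching_matrix :: "nat set set \<Rightarrow> nat \<Rightarrow> nat \<Rightarrow> real" where
  "matching_matrix M u v =
     (if u = v then (if (\<exists>w. {u, w} \<in> M) then 1/2 else 1)
      else if {u, v} \<in> M then 1/2 else 0)"

definition cont_step :: "nat \<Rightarrow> nat set set \<Rightarrow> (nat \<Rightarrow> real) \<Rightarrow> (nat \<Rightarrow> real)" where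
  "cont_step n M \<xi> = (\<lambda>v. \<Sum>u<n. \<xi> u * matching_matrix M u v)"

text \<open>cont_proc n ms s xi k: start with xi at time s and apply the matchings
  ms (s+1), ..., ms (s+k).\<close>
fun cont_proc :: "nat \<Rightarrow> (nat \<Rightarrow> nat set set) \<Rightarrow> nat \<Rightarrow> (nat \<Rightarrow> real) \<Rightarrow> nat \<Rightarrow> (nat \<Rightarrow> real)" where
  "cont_proc n ms s \<xi> 0 = \<xi>"
| "cont_proc n ms s \<xi> (Suc k) = cont_step n (ms (s + Suc k)) (cont_proc n ms s \<xi> k)"

definition discrepancy :: "nat \<Rightarrow> (nat \<Rightarrow> real) \<Rightarrow> real" where
  "discrepancy n \<xi> = Max {\<bar>\<xi> u - \<xi> v\<bar> | u v. u < n \<and> v < n}"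

definition smoothing :: "nat \<Rightarrow> (nat \<Rightarrow> nat set set) \<Rightarrow> nat \<Rightarrow> nat \<Rightarrow> real \<Rightarrow> real \<Rightarrow> bool" where
  "smoothing n ms t1 t2 K \<epsilon> \<longleftrightarrow>
     (\<forall>\<xi>. discrepancy n \<xi> \<le> K \<longrightarrow> discrepancy n (cont_proc n ms t1 \<xi> (t2 - t1)) \<le> \<epsilon>)"

text \<open>Random matching model: mu t is the distribution of the matching in round t
  (t \<ge> 1); rounds are independent, so the matchings of rounds 1..t are drawn
  from the product distribution.\<close>
definition p_min :: "nat \<Rightarrow> (nat \<Rightarrow> nat \<Rightarrow> bool) \<Rightarrow> (nat \<Rightarrow> nat set set pmf) \<Rightarrow> real" where
  "p_min n E \<mu> = (INF t\<in>{1..}. INF e\<in>edge_set n E. measure_pmf.prob (\<mu> t) {M. e \<in> M})"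

definition smoothing_prob :: "nat \<Rightarrow> (nat \<Rightarrow> nat set set pmf) \<Rightarrow> nat \<Rightarrow> real \<Rightarrow> real \<Rightarrow> real" where
  "smoothing_prob n \<mu> t K \<epsilon> =
     measure_pmf.prob (Pi_pmf {1..t} {} \<mu>) {ms. smoothing n ms 0 t K \<epsilon>}"

definition tau_cont :: "nat \<Rightarrow> (nat \<Rightarrow> nat set set pmf) \<Rightarrow> real \<Rightarrow> real \<Rightarrow> nat" where
  "tau_cont n \<mu> K \<epsilon> = (LEAST t. smoothing_prob n \<mu> t K \<epsilon> \<ge> 1 - 1 / real n)"

definition P_mat :: "nat \<Rightarrow> (nat \<Rightarrow> nat \<Rightarrow> bool) \<Rightarrow> real mat" where
  "P_mat n E = mat n n (\<lambda>(u, v).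
     if u = v then 1 - real (graph_deg n E u) / (2 * real (max_deg n E))
     else if E u v then 1 / (2 * real (max_deg n E)) else 0)"

text \<open>Eigenvalues (with multiplicity) of a real matrix whose characteristic
  polynomial splits over the reals, in non-increasing order; lambda_2 is the
  second entry.\<close>
definition eigenvalues_desc :: "real mat \<Rightarrow> real list" where
  "eigenvalues_desc A = (THE xs. sorted_wrt (\<ge>) xs \<and>
       char_poly A = (\<Prod>x\<leftarrow>xs. [:- x, 1:]))"

definition lambda2 :: "real mat \<Rightarrow> real" where
  "lambda2 A = eigenvalues_desc A ! 1"

end

theory Submission
  imports Defs "Jordan_Normal_Form.Schur_Decomposition"
begin

text \<open>For a start vector concentrated on node \<open>w\<close>, the process computes row \<open>w\<close> of
  \<open>M\<^sup>(\<^sup>1\<^sup>) \<cdots> M\<^sup>(\<^sup>t\<^sup>)\<close>; the potential \<open>\<Phi>\<^sub>t\<close> sums the squared distances of these rows from the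
  uniform vector. A matching averages the endpoints of its edges, which lowers
  \<open>\<parallel>x - x\<^bsub>mean\<^esub>\<parallel>\<^sup>2\<close> by a quarter of the energy of the matched edges. In expectation this is at
  least \<open>p\<^sub>m\<^sub>i\<^sub>n\<close> times the energy of the whole graph, and the spectral gap of \<open>P\<close> bounds that
  from below by \<open>4d(1 - \<lambda>\<^sub>2) \<parallel>x - x\<^bsub>mean\<^esub>\<parallel>\<^sup>2\<close>. Hence \<open>E \<Phi>\<^sub>t \<le> (1 - p\<^sub>m\<^sub>i\<^sub>n d (1 - \<lambda>\<^sub>2))\<^sup>t (n - 1)\<close>.
  By Cauchy-Schwarz, \<open>\<Phi>\<^sub>t \<le> \<epsilon>\<^sup>2 / (4 K\<^sup>2 n)\<close> makes \<open>[0, t]\<close> \<open>(K, \<epsilon>)\<close>-smoothing, and Markov's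
  inequality shows that this fails with probability at most \<open>1/n\<close> once
  \<open>t \<ge> 2 ln (2 K n\<^sup>2 / \<epsilon>) / (p\<^sub>m\<^sub>i\<^sub>n d (1 - \<lambda>\<^sub>2))\<close>.\<close>

unbundle no inner_syntax
unbundle no vec_syntax

section \<open>Real symmetric matrices\<close>

lemma poly_prod_linear_factors_eq_0_iff:
  "poly (\<Prod>y\<leftarrow>ys. [:- y, 1:]) x = 0 \<longleftrightarrow> x \<in> set ys" for x :: "'a :: idom"
  by (induct ys) auto

text \<open>The Hermitian form \<open>v\<^sup>* A v = a v\<^sup>* v\<close> is real because \<open>A\<close> is real symmetric.\<close>

lemma real_symmetric_complex_eigenvalue_real:
  fixes A :: "real mat"
  assumes A: "A \<in> carrier_mat n n" and sym: "A\<^sup>T = A"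
    and ev: "eigenvector (map_mat complex_of_real A) v a"
  shows "Im a = 0"
proof -
  have v: "v \<in> carrier_vec n" "v \<noteq> 0\<^sub>v n" "map_mat complex_of_real A *\<^sub>v v = a \<cdot>\<^sub>v v"
    using ev A unfolding eigenvector_def by auto
  have Aij: "A $$ (i,j) = A $$ (j,i)" if "i < n" "j < n" for i j
    using sym that A by (metis carrier_matD(1) carrier_matD(2) index_transpose_mat(1))
  define S where "S = (\<Sum>i<n. cnj (v $ i) * (\<Sum>j<n. complex_of_real (A $$ (i,j)) * v $ j))"
  define T where "T = (\<Sum>i<n. cnj (v $ i) * v $ i)"
  have "a * v $ i = (\<Sum>j<n. complex_of_real (A $$ (i,j)) * v $ j)" if "i < n" for i
  proof -
    have "(map_mat complex_of_real A *\<^sub>v v) $ i = (\<Sum>j<n. complex_of_real (A $$ (i,j)) * v $ j)"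
      using that v(1) A by (auto simp: scalar_prod_def atLeast0LessThan)
    moreover have "(map_mat complex_of_real A *\<^sub>v v) $ i = a * v $ i" using v(1,3) that by simp
    ultimately show ?thesis by simp
  qed
  hence "S = (\<Sum>i<n. cnj (v $ i) * (a * v $ i))" unfolding S_def by (intro sum.cong) auto
  hence ST: "S = a * T" unfolding T_def by (simp add: sum_distrib_left ac_simps)
  have "cnj S = (\<Sum>i<n. \<Sum>j<n. complex_of_real (A $$ (i,j)) * cnj (v $ j) * v $ i)"
    unfolding S_def by (simp add: cnj_sum sum_distrib_left ac_simps)
  also have "\<dots> = (\<Sum>j<n. \<Sum>i<n. complex_of_real (A $$ (i,j)) * cnj (v $ j) * v $ i)"
    by (rule sum.swap)
  also have "\<dots> = S" unfolding S_def by (simp add: sum_distrib_left ac_simps Aij)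
  finally have S_real: "cnj S = S" .
  have T_eq: "T = complex_of_real (\<Sum>i<n. (cmod (v $ i))\<^sup>2)"
    unfolding T_def of_real_sum
    by (intro sum.cong refl, subst mult.commute) (simp only: complex_norm_square[symmetric] of_real_power)
  obtain i where i: "i < n" "v $ i \<noteq> 0" using v by (metis eq_vecI carrier_vecD index_zero_vec)
  have "(\<Sum>i<n. (cmod (v $ i))\<^sup>2) \<ge> (cmod (v $ i))\<^sup>2"
    using i by (intro member_le_sum) auto
  moreover have "(cmod (v $ i))\<^sup>2 > 0" using i by simp
  ultimately have "T \<noteq> 0" unfolding T_eq by (metis of_real_eq_0_iff not_less order.refl)
  hence "a = S / T" using ST by simp
  moreover have "Im S = 0" using arg_cong[OF S_real, of Im] by simp
  ultimately show "Im a = 0" unfolding T_eq by (simp add: Im_divide)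
qed

lemma real_symmetric_eigenvalue_exists:
  fixes A :: "real mat"
  assumes A: "A \<in> carrier_mat n n" and sym: "A\<^sup>T = A" and n: "n > 0"
  shows "\<exists>e. eigenvalue A e"
proof -
  define Ac where "Ac = map_mat complex_of_real A"
  have Ac: "Ac \<in> carrier_mat n n" using A unfolding Ac_def by auto
  obtain as where as: "char_poly Ac = (\<Prod>a\<leftarrow>as. [:- a, 1:])" "length as = n"
    using char_poly_factorized[OF Ac] by blast
  then obtain a where a: "a \<in> set as" using n by (cases as) auto
  have root: "poly (char_poly Ac) a = 0"
    unfolding as(1) poly_prod_linear_factors_eq_0_iff using a .
  hence "eigenvalue Ac a" using eigenvalue_root_char_poly[OF Ac] by simp
  then obtain v where "eigenvector Ac v a" unfolding eigenvalue_def by auto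
  hence "Im a = 0" using real_symmetric_complex_eigenvalue_real[OF A sym] unfolding Ac_def by blast
  hence "a = complex_of_real (Re a)" by (simp add: complex_eq_iff)
  hence "poly (map_poly complex_of_real (char_poly A)) (complex_of_real (Re a)) = 0"
    using root of_real_hom.char_poly_hom[OF A] unfolding Ac_def by metis
  hence "poly (char_poly A) (Re a) = 0" by simp
  thus ?thesis using eigenvalue_root_char_poly[OF A] by blast
qed

lemma conjugate_real_vec [simp]: "conjugate (v :: real vec) = v"
  by (rule eq_vecI) auto

lemma scalar_prod_self_nonneg: "(v :: real vec) \<bullet> v \<ge> 0"
  unfolding scalar_prod_def by (intro sum_nonneg) auto

definition orthonormal :: "nat \<Rightarrow> real vec list \<Rightarrow> bool" where
  "orthonormal n ws \<longleftrightarrow> length ws = n \<and> set ws \<subseteq> carrier_vec n \<and>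
     (\<forall>i<n. \<forall>j<n. ws ! i \<bullet> ws ! j = (if i = j then 1 else 0))"

definition orthonormal_eigenbasis :: "real mat \<Rightarrow> nat \<Rightarrow> real vec list \<Rightarrow> real list \<Rightarrow> bool" where
  "orthonormal_eigenbasis A n vs ls \<longleftrightarrow>
     orthonormal n vs \<and> length ls = n \<and> (\<forall>i<n. A *\<^sub>v (vs ! i) = ls ! i \<cdot>\<^sub>v vs ! i)"

lemma orthonormal_basis_extending:
  assumes v: "v \<in> carrier_vec n" and v1: "v \<bullet> v = 1"
  shows "\<exists>ws. orthonormal n ws \<and> ws ! 0 = v"
proof -
  have v0: "v \<noteq> 0\<^sub>v n" using v1 by auto
  have n0: "n \<noteq> 0" using v v1 by (cases n) (auto simp: scalar_prod_def)
  interpret cof_vec_space n "TYPE(real)" .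
  define b where "b = basis_completion v"
  have b: "set b \<subseteq> carrier_vec n" "distinct b" "\<not> lin_dep (set b)"
    using basis_completion[OF v v0] unfolding b_def by auto
  define us where "us = gram_schmidt n b"
  note gs = gram_schmidt_result[OF b us_def]
  obtain bs where "b = v # bs" unfolding b_def basis_completion_def by (simp add: Let_def)
  hence "hd us = v" unfolding us_def using gram_schmidt_hd[OF v] by simp
  have lus: "length us = n"
    using gs basis_completion[OF v v0] unfolding b_def by simp
  have usc: "us ! i \<in> carrier_vec n" if "i < n" for i using gs(3) lus that by auto
  have orth: "us ! i \<bullet> us ! j = 0 \<longleftrightarrow> i \<noteq> j" if "i < n" "j < n" for i j
    using corthogonalD[OF gs(2), of i j] lus that by simp
  have pos: "us ! i \<bullet> us ! i > 0" if "i < n" for i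
    using orth[OF that that] scalar_prod_self_nonneg[of "us ! i"] by linarith
  define normalize where "normalize w = (1 / sqrt (w \<bullet> w)) \<cdot>\<^sub>v w" for w :: "real vec"
  define ws where "ws = map normalize us"
  have "us ! 0 = v" using \<open>hd us = v\<close> lus n0 by (cases us) auto
  hence "ws ! 0 = v" unfolding ws_def using lus n0 by (simp add: normalize_def v1)
  moreover have "orthonormal n ws"
    unfolding orthonormal_def
  proof (intro conjI allI impI)
    show "length ws = n" unfolding ws_def using lus by simp
    show "set ws \<subseteq> carrier_vec n" unfolding ws_def normalize_def using gs(3) by auto
    fix i j assume i: "i < n" and j: "j < n"
    have "ws ! i \<bullet> ws ! j =
        (1 / sqrt (us ! i \<bullet> us ! i)) * (1 / sqrt (us ! j \<bullet> us ! j)) * (us ! i \<bullet> us ! j)"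
      unfolding ws_def normalize_def using i j lus usc[OF i] usc[OF j]
      by (simp add: smult_scalar_prod_distrib scalar_prod_smult_distrib)
    also have "\<dots> = (if i = j then 1 else 0)"
    proof (cases "i = j")
      case True
      have "(1 / sqrt (us ! i \<bullet> us ! i)) * (1 / sqrt (us ! i \<bullet> us ! i)) * (us ! i \<bullet> us ! i) = 1"
        using pos[OF i] by (simp add: field_simps)
      thus ?thesis using True by simp
    next
      case False
      thus ?thesis using orth[OF i j] by simp
    qed
    finally show "ws ! i \<bullet> ws ! j = (if i = j then 1 else 0)" .
  qed
  ultimately show ?thesis by blast
qed

lemma orthonormal_mat_of_cols:
  assumes "orthonormal n vs"
  defines "W \<equiv> mat_of_cols n vs"
  shows "W \<in> carrier_mat n n" "W\<^sup>T * W = 1\<^sub>m n" "W * W\<^sup>T = 1\<^sub>m n"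
    "\<And>i. i < n \<Longrightarrow> col W i = vs ! i"
proof -
  have lvs: "length vs = n" and vsc: "\<And>i. i < n \<Longrightarrow> vs ! i \<in> carrier_vec n"
    and vso: "\<And>i j. i < n \<Longrightarrow> j < n \<Longrightarrow> vs ! i \<bullet> vs ! j = (if i = j then 1 else 0)"
    using assms unfolding orthonormal_def by auto
  show W: "W \<in> carrier_mat n n" unfolding W_def using mat_of_cols_carrier(1)[of n vs] lvs by simp
  show colW: "\<And>i. i < n \<Longrightarrow> col W i = vs ! i" unfolding W_def using lvs vsc by simp
  show WtW: "W\<^sup>T * W = 1\<^sub>m n"
    by (rule eq_matI) (use W colW vso in auto)
  show "W * W\<^sup>T = 1\<^sub>m n"
    using mat_mult_left_right_inverse[OF _ W WtW] W by simp
qed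

lemma orthogonal_mat_preserves_scalar_prod:
  fixes W :: "real mat"
  assumes W: "W \<in> carrier_mat n n" and WtW: "W\<^sup>T * W = 1\<^sub>m n"
    and x: "x \<in> carrier_vec n" and y: "y \<in> carrier_vec n"
  shows "(W *\<^sub>v x) \<bullet> (W *\<^sub>v y) = x \<bullet> y"
proof -
  have "(W\<^sup>T *\<^sub>v (W *\<^sub>v x)) \<bullet> y = (W *\<^sub>v x) \<bullet> (W *\<^sub>v y)"
    by (rule transpose_vec_mult_scalar[OF W y]) (use W x in simp)
  moreover have "W\<^sup>T *\<^sub>v (W *\<^sub>v x) = x"
    using WtW W x by (simp flip: assoc_mult_mat_vec[of _ n n _ n])
  ultimately show ?thesis by simp
qed

definition shift_vec :: "nat \<Rightarrow> real vec \<Rightarrow> real vec" where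
  "shift_vec n y = vec (Suc n) (\<lambda>i. if i = 0 then 0 else y $ (i - 1))"

lemma shift_vec_carrier [simp]: "shift_vec n y \<in> carrier_vec (Suc n)"
  unfolding shift_vec_def by simp

lemma scalar_prod_shift_vec:
  assumes "y \<in> carrier_vec n" "y' \<in> carrier_vec n"
  shows "shift_vec n y \<bullet> shift_vec n y' = y \<bullet> y'"
proof -
  have "shift_vec n y \<bullet> shift_vec n y' = (\<Sum>i = 0..<Suc n. shift_vec n y $ i * shift_vec n y' $ i)"
    by (simp add: scalar_prod_def shift_vec_def)
  also have "\<dots> = (\<Sum>i = 0..<n. shift_vec n y $ Suc i * shift_vec n y' $ Suc i)"
    by (simp only: sum.atLeast0_lessThan_Suc_shift o_def) (simp add: shift_vec_def)
  also have "\<dots> = y \<bullet> y'" using assms by (simp add: shift_vec_def scalar_prod_def)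
  finally show ?thesis .
qed

lemma scalar_prod_unit_shift_vec: "unit_vec (Suc n) 0 \<bullet> shift_vec n y = 0"
proof -
  have "unit_vec (Suc n) 0 \<bullet> shift_vec n y =
      (\<Sum>i = 0..<Suc n. unit_vec (Suc n) 0 $ i * shift_vec n y $ i)"
    by (simp add: scalar_prod_def shift_vec_def)
  also have "\<dots> = 0"
    by (simp only: sum.atLeast0_lessThan_Suc_shift o_def) (simp add: shift_vec_def)
  finally show ?thesis .
qed

lemma shift_vec_smult: "y \<in> carrier_vec n \<Longrightarrow> shift_vec n (c \<cdot>\<^sub>v y) = c \<cdot>\<^sub>v shift_vec n y"
  unfolding shift_vec_def by (rule eq_vecI) auto

lemma orthonormal_eigenbasis_orthogonal_conj:
  fixes A W :: "real mat"
  assumes A: "A \<in> carrier_mat n n"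
    and W: "W \<in> carrier_mat n n" and WtW: "W\<^sup>T * W = 1\<^sub>m n" and WWt: "W * W\<^sup>T = 1\<^sub>m n"
    and B: "orthonormal_eigenbasis (W\<^sup>T * A * W) n us ls"
  shows "orthonormal_eigenbasis A n (map (\<lambda>u. W *\<^sub>v u) us) ls"
proof -
  have lus: "length us = n" and usc: "\<And>i. i < n \<Longrightarrow> us ! i \<in> carrier_vec n"
    and uso: "\<And>i j. i < n \<Longrightarrow> j < n \<Longrightarrow> us ! i \<bullet> us ! j = (if i = j then 1 else 0)"
    and lls: "length ls = n" and ev: "\<And>i. i < n \<Longrightarrow> (W\<^sup>T * A * W) *\<^sub>v (us ! i) = ls ! i \<cdot>\<^sub>v us ! i"
    using B unfolding orthonormal_eigenbasis_def orthonormal_def by auto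
  have "W * (W\<^sup>T * A * W) = (W * W\<^sup>T) * A * W" using W A
    by (simp add: assoc_mult_mat[of _ n n _ n _ n])
  also have "\<dots> = A * W" using WWt A W by simp
  finally have AW: "A * W = W * (W\<^sup>T * A * W)" ..
  show ?thesis
    unfolding orthonormal_eigenbasis_def orthonormal_def
  proof (intro conjI allI impI)
    show "length (map (\<lambda>u. W *\<^sub>v u) us) = n" "length ls = n" using lus lls by auto
    show "set (map (\<lambda>u. W *\<^sub>v u) us) \<subseteq> carrier_vec n"
      using W usc lus by (auto simp: in_set_conv_nth)
    fix i j assume i: "i < n" and j: "j < n"
    show "map (\<lambda>u. W *\<^sub>v u) us ! i \<bullet> map (\<lambda>u. W *\<^sub>v u) us ! j = (if i = j then 1 else 0)"
      using orthogonal_mat_preserves_scalar_prod[OF W WtW usc[OF i] usc[OF j]] uso[OF i j] i j lus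
      by simp
  next
    fix i assume i: "i < n"
    have "A *\<^sub>v (W *\<^sub>v us ! i) = (A * W) *\<^sub>v us ! i"
      using A W usc[OF i] by simp
    also have "\<dots> = W *\<^sub>v ((W\<^sup>T * A * W) *\<^sub>v us ! i)"
      unfolding AW using A W usc[OF i] by (simp add: assoc_mult_mat_vec[of _ n n _ n])
    also have "\<dots> = ls ! i \<cdot>\<^sub>v (W *\<^sub>v us ! i)" using ev[OF i] W usc[OF i] by (simp add: mult_mat_vec)
    finally show "A *\<^sub>v map (\<lambda>u. W *\<^sub>v u) us ! i = ls ! i \<cdot>\<^sub>v map (\<lambda>u. W *\<^sub>v u) us ! i"
      using i lus by simp
  qed
qed

lemma mult_mat_vec_shift_vec:
  fixes B :: "real mat"
  assumes B: "B \<in> carrier_mat (Suc n) (Suc n)"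
    and row0: "\<And>j. 0 < j \<Longrightarrow> j < Suc n \<Longrightarrow> B $$ (0, j) = 0" and y: "y \<in> carrier_vec n"
  shows "B *\<^sub>v shift_vec n y = shift_vec n (mat n n (\<lambda>(i, j). B $$ (Suc i, Suc j)) *\<^sub>v y)"
proof (rule eq_vecI)
  show "dim_vec (B *\<^sub>v shift_vec n y) = dim_vec (shift_vec n (mat n n (\<lambda>(i, j). B $$ (Suc i, Suc j)) *\<^sub>v y))"
    using B by (simp add: shift_vec_def)
  fix i assume "i < dim_vec (shift_vec n (mat n n (\<lambda>(i, j). B $$ (Suc i, Suc j)) *\<^sub>v y))"
  hence i: "i < Suc n" by (simp add: shift_vec_def)
  have "(B *\<^sub>v shift_vec n y) $ i = (\<Sum>j = 0..<Suc n. B $$ (i, j) * shift_vec n y $ j)"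
    using i B by (simp add: scalar_prod_def shift_vec_def del: sum.op_ivl_Suc)
  also have "\<dots> = (\<Sum>j = 0..<n. B $$ (i, Suc j) * y $ j)"
    by (simp only: sum.atLeast0_lessThan_Suc_shift o_def) (simp add: shift_vec_def)
  also have "\<dots> = shift_vec n (mat n n (\<lambda>(i, j). B $$ (Suc i, Suc j)) *\<^sub>v y) $ i"
  proof (cases i)
    case 0
    thus ?thesis using row0 by (simp add: shift_vec_def)
  next
    case (Suc i')
    thus ?thesis using i y by (simp add: shift_vec_def scalar_prod_def)
  qed
  finally show "(B *\<^sub>v shift_vec n y) $ i =
    shift_vec n (mat n n (\<lambda>(i, j). B $$ (Suc i, Suc j)) *\<^sub>v y) $ i" .
qed

lemma orthonormal_eigenbasis_split_first:
  fixes B :: "real mat"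
  assumes B: "B \<in> carrier_mat (Suc n) (Suc n)"
    and col0: "\<And>i. i < Suc n \<Longrightarrow> B $$ (i, 0) = (if i = 0 then e else 0)"
    and row0: "\<And>j. j < Suc n \<Longrightarrow> B $$ (0, j) = (if j = 0 then e else 0)"
    and C: "orthonormal_eigenbasis (mat n n (\<lambda>(i, j). B $$ (Suc i, Suc j))) n ys ks"
  shows "orthonormal_eigenbasis B (Suc n) (unit_vec (Suc n) 0 # map (shift_vec n) ys) (e # ks)"
proof -
  let ?N = "Suc n"
  let ?C = "mat n n (\<lambda>(i, j). B $$ (Suc i, Suc j))"
  let ?vs = "unit_vec ?N 0 # map (shift_vec n) ys"
  have lys: "length ys = n" and ysc: "\<And>i. i < n \<Longrightarrow> ys ! i \<in> carrier_vec n"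
    and yso: "\<And>i j. i < n \<Longrightarrow> j < n \<Longrightarrow> ys ! i \<bullet> ys ! j = (if i = j then 1 else 0)"
    and lks: "length ks = n" and yev: "\<And>i. i < n \<Longrightarrow> ?C *\<^sub>v (ys ! i) = ks ! i \<cdot>\<^sub>v ys ! i"
    using C unfolding orthonormal_eigenbasis_def orthonormal_def by auto
  have B_unit: "B *\<^sub>v unit_vec ?N 0 = e \<cdot>\<^sub>v unit_vec ?N 0"
  proof (rule eq_vecI)
    fix i assume "i < dim_vec (e \<cdot>\<^sub>v unit_vec ?N 0)"
    hence i: "i < ?N" by simp
    have "(B *\<^sub>v unit_vec ?N 0) $ i = B $$ (i, 0)" using i B by simp
    thus "(B *\<^sub>v unit_vec ?N 0) $ i = (e \<cdot>\<^sub>v unit_vec ?N 0) $ i" using col0[OF i] i by auto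
  qed (use B in simp)
  show ?thesis
    unfolding orthonormal_eigenbasis_def orthonormal_def
  proof (intro conjI allI impI)
    show "length ?vs = ?N" "length (e # ks) = ?N" using lys lks by auto
    show "set ?vs \<subseteq> carrier_vec ?N" by auto
    fix i j assume i: "i < ?N" and j: "j < ?N"
    show "?vs ! i \<bullet> ?vs ! j = (if i = j then 1 else 0)"
    proof (cases i; cases j)
      fix i' j' assume "i = Suc i'" "j = Suc j'"
      thus ?thesis using i j lys scalar_prod_shift_vec[OF ysc ysc] yso by simp
    qed (use i j lys in \<open>auto simp: scalar_prod_unit_shift_vec comm_scalar_prod[of "shift_vec n _" ?N]
        shift_vec_def\<close>)
  next
    fix i assume i: "i < ?N"
    show "B *\<^sub>v ?vs ! i = (e # ks) ! i \<cdot>\<^sub>v ?vs ! i"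
    proof (cases i)
      case 0
      thus ?thesis using B_unit by simp
    next
      case (Suc i')
      hence i': "i' < n" using i by simp
      have row0': "\<And>j. 0 < j \<Longrightarrow> j < ?N \<Longrightarrow> B $$ (0, j) = 0" using row0 by simp
      show ?thesis
        using Suc i' lys mult_mat_vec_shift_vec[OF B row0' ysc[OF i']] yev[OF i'] ysc[OF i']
        by (simp add: shift_vec_smult)
    qed
  qed
qed

lemma real_symmetric_unit_eigenvector:
  fixes A :: "real mat"
  assumes A: "A \<in> carrier_mat n n" and sym: "A\<^sup>T = A" and n: "n > 0"
  shows "\<exists>e v. v \<in> carrier_vec n \<and> v \<bullet> v = 1 \<and> A *\<^sub>v v = e \<cdot>\<^sub>v v"
proof -
  obtain e v0 where "eigenvector A v0 e"
    using real_symmetric_eigenvalue_exists[OF A sym n] unfolding eigenvalue_def by auto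
  hence v0: "v0 \<in> carrier_vec n" "v0 \<noteq> 0\<^sub>v n" "A *\<^sub>v v0 = e \<cdot>\<^sub>v v0"
    unfolding eigenvector_def using A by auto
  have "v0 \<bullet> v0 \<noteq> 0"
    using conjugate_square_eq_0_vec[OF v0(1)] v0(2) by simp
  hence pos: "v0 \<bullet> v0 > 0" using scalar_prod_self_nonneg[of v0] by linarith
  define v where "v = (1 / sqrt (v0 \<bullet> v0)) \<cdot>\<^sub>v v0"
  have "v \<in> carrier_vec n" unfolding v_def using v0 by simp
  moreover have "v \<bullet> v = 1" unfolding v_def using v0(1) pos
    by (simp add: smult_scalar_prod_distrib scalar_prod_smult_distrib field_simps)
  moreover have "A *\<^sub>v v = e \<cdot>\<^sub>v v" unfolding v_def using v0 A
    by (simp add: mult_mat_vec smult_smult_assoc mult.commute)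
  ultimately show ?thesis by blast
qed

lemma symmetric_first_col_unit:
  fixes B :: "'a :: comm_ring_1 mat"
  assumes B: "B \<in> carrier_mat (Suc n) (Suc n)" and sym: "B\<^sup>T = B"
    and col0: "\<And>i. i < Suc n \<Longrightarrow> B $$ (i, 0) = (if i = 0 then e else 0)"
  shows "\<And>j. j < Suc n \<Longrightarrow> B $$ (0, j) = (if j = 0 then e else 0)"
    and "(mat n n (\<lambda>(i, j). B $$ (Suc i, Suc j)))\<^sup>T = mat n n (\<lambda>(i, j). B $$ (Suc i, Suc j))"
proof -
  fix j assume "j < Suc n"
  hence "B $$ (0, j) = B\<^sup>T $$ (j, 0)" using B by simp
  thus "B $$ (0, j) = (if j = 0 then e else 0)" using sym col0[OF \<open>j < Suc n\<close>] by simp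
next
  show "(mat n n (\<lambda>(i, j). B $$ (Suc i, Suc j)))\<^sup>T = mat n n (\<lambda>(i, j). B $$ (Suc i, Suc j))"
  proof (rule eq_matI)
    fix i j assume "i < dim_row (mat n n (\<lambda>(i, j). B $$ (Suc i, Suc j)))"
      "j < dim_col (mat n n (\<lambda>(i, j). B $$ (Suc i, Suc j)))"
    hence "i < n" "j < n" by auto
    moreover have "B $$ (Suc j, Suc i) = B\<^sup>T $$ (Suc i, Suc j)" using B \<open>i < n\<close> \<open>j < n\<close> by simp
    ultimately show "(mat n n (\<lambda>(i, j). B $$ (Suc i, Suc j)))\<^sup>T $$ (i, j) =
      mat n n (\<lambda>(i, j). B $$ (Suc i, Suc j)) $$ (i, j)" using sym by simp
  qed simp_all
qed

text \<open>Conjugating by an orthogonal matrix whose first column is a unit eigenvector splits off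
  that eigenvalue; the remaining block is again symmetric.\<close>

theorem real_symmetric_orthonormal_eigenbasis:
  fixes A :: "real mat"
  assumes "A \<in> carrier_mat n n" "A\<^sup>T = A"
  shows "\<exists>vs ls. orthonormal_eigenbasis A n vs ls"
  using assms
proof (induct n arbitrary: A)
  case 0
  show ?case by (auto simp: orthonormal_eigenbasis_def orthonormal_def)
next
  case (Suc n A)
  let ?N = "Suc n"
  have A: "A \<in> carrier_mat ?N ?N" and sym: "A\<^sup>T = A" by fact+
  obtain e v where vc: "v \<in> carrier_vec ?N" and v1: "v \<bullet> v = 1" and Av: "A *\<^sub>v v = e \<cdot>\<^sub>v v"
    using real_symmetric_unit_eigenvector[OF A sym] by blast
  obtain ws where ws: "orthonormal ?N ws" "ws ! 0 = v"
    using orthonormal_basis_extending[OF vc v1] by blast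
  have wsc: "\<And>i. i < ?N \<Longrightarrow> ws ! i \<in> carrier_vec ?N"
    and wso: "\<And>i j. i < ?N \<Longrightarrow> j < ?N \<Longrightarrow> ws ! i \<bullet> ws ! j = (if i = j then 1 else 0)"
    using ws(1) unfolding orthonormal_def by auto
  define W where "W = mat_of_cols ?N ws"
  note W = orthonormal_mat_of_cols[OF ws(1), folded W_def]
  define B where "B = W\<^sup>T * A * W"
  have B: "B \<in> carrier_mat ?N ?N" unfolding B_def using W A by simp
  have Bsym: "B\<^sup>T = B" unfolding B_def using W A sym
    by (simp add: transpose_mult[of _ ?N ?N _ ?N] assoc_mult_mat[of _ ?N ?N _ ?N _ ?N])
  have col0: "B $$ (i, 0) = (if i = 0 then e else 0)" if "i < ?N" for i
  proof -
    have "B = W\<^sup>T * (A * W)" unfolding B_def using W A by simp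
    hence "B $$ (i, 0) = row W\<^sup>T i \<bullet> col (A * W) 0" using that W A by simp
    also have "\<dots> = ws ! i \<bullet> (A *\<^sub>v ws ! 0)" using that W A by (simp add: mult_mat_vec_def)
    also have "\<dots> = e * (ws ! i \<bullet> ws ! 0)"
      using Av ws(2) wsc[OF that] vc by (simp add: scalar_prod_smult_distrib)
    finally show ?thesis using wso[OF that, of 0] by simp
  qed
  note block = symmetric_first_col_unit[OF B Bsym col0]
  define C where "C = mat n n (\<lambda>(i, j). B $$ (Suc i, Suc j))"
  have "C\<^sup>T = C" unfolding C_def by (rule block(2))
  then obtain ys ks where "orthonormal_eigenbasis C n ys ks"
    using Suc.hyps[of C] unfolding C_def by auto
  from orthonormal_eigenbasis_split_first[OF B col0 block(1) this[unfolded C_def]]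
  show ?case using orthonormal_eigenbasis_orthogonal_conj[OF A W(1-3)] unfolding B_def by blast
qed

lemma prod_linear_factors_eq_imp_mset_eq:
  "(\<Prod>y\<leftarrow>ys. [:- y, 1:]) = (\<Prod>y\<leftarrow>zs. [:- y, 1:] :: 'a :: idom poly) \<Longrightarrow> mset ys = mset zs"
proof (induct ys arbitrary: zs)
  case Nil
  have "degree (\<Prod>y\<leftarrow>zs. [:- y, 1:] :: 'a poly) = length zs"
    using degree_linear_factors[of uminus zs] by simp
  thus ?case using Nil by simp
next
  case (Cons y ys zs)
  have "poly (\<Prod>y\<leftarrow>zs. [:- y, 1:]) y = 0" using Cons(2)[symmetric] by (simp add: poly_prod_list)
  hence yz: "y \<in> set zs" by (induct zs) auto
  have "(\<Prod>y\<leftarrow>zs. [:- y, 1:]) = [:- y, 1:] * (\<Prod>y\<leftarrow>remove1 y zs. [:- y, 1:] :: 'a poly)"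
    by (rule prod_list_map_remove1[OF yz])
  with Cons(2) have "[:- y, 1:] * (\<Prod>y\<leftarrow>ys. [:- y, 1:]) =
      [:- y, 1:] * (\<Prod>y\<leftarrow>remove1 y zs. [:- y, 1:] :: 'a poly)"
    by simp
  hence "(\<Prod>y\<leftarrow>ys. [:- y, 1:]) = (\<Prod>y\<leftarrow>remove1 y zs. [:- y, 1:] :: 'a poly)"
    by (simp del: mult_pCons_left)
  from Cons(1)[OF this] yz show ?case by simp
qed

lemma prod_linear_factors_eq_iff_mset_eq:
  "(\<Prod>y\<leftarrow>ys. [:- y, 1:]) = (\<Prod>y\<leftarrow>zs. [:- y, 1:] :: 'a :: idom poly) \<longleftrightarrow> mset ys = mset zs"
proof
  assume "mset ys = mset zs"
  hence "mset (map (\<lambda>y. [:- y, 1:]) ys) = mset (map (\<lambda>y. [:- y, 1:] :: 'a poly) zs)" by simp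
  thus "(\<Prod>y\<leftarrow>ys. [:- y, 1:]) = (\<Prod>y\<leftarrow>zs. [:- y, 1:] :: 'a poly)"
    by (metis prod_mset_prod_list)
qed (rule prod_linear_factors_eq_imp_mset_eq)

lemma eigenvalues_desc_eq:
  assumes "char_poly A = (\<Prod>l\<leftarrow>ls. [:- l, 1:])"
  shows "eigenvalues_desc A = rev (sort ls)"
  unfolding eigenvalues_desc_def
proof (rule the_equality)
  show "sorted_wrt (\<ge>) (rev (sort ls)) \<and> char_poly A = (\<Prod>x\<leftarrow>rev (sort ls). [:- x, 1:])"
    using assms prod_linear_factors_eq_iff_mset_eq[of "rev (sort ls)" ls] by (simp add: sorted_wrt_rev)
next
  fix xs assume "sorted_wrt (\<ge>) xs \<and> char_poly A = (\<Prod>x\<leftarrow>xs. [:- x, 1:])"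
  hence "sorted (rev xs)" and "mset xs = mset ls"
    using assms prod_linear_factors_eq_iff_mset_eq[of xs ls] by (auto simp: sorted_wrt_rev)
  hence "sort ls = rev xs" by (intro properties_for_sort) auto
  thus "xs = rev (sort ls)" by simp
qed

lemma orthonormal_eigenbasis_diagonalizes:
  assumes es: "orthonormal_eigenbasis A n vs ls" and A: "A \<in> carrier_mat n n"
  defines "W \<equiv> mat_of_cols n vs" and "D \<equiv> mat n n (\<lambda>(i, j). if i = j then ls ! i else 0)"
  shows "A * W = W * D"
proof -
  have onb: "orthonormal n vs" and ev: "\<And>i. i < n \<Longrightarrow> A *\<^sub>v (vs ! i) = ls ! i \<cdot>\<^sub>v vs ! i"
    using es unfolding orthonormal_eigenbasis_def by auto
  note Wp = orthonormal_mat_of_cols[OF onb, folded W_def]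
  have vsc: "\<And>i. i < n \<Longrightarrow> vs ! i \<in> carrier_vec n" using onb unfolding orthonormal_def by auto
  have D: "D \<in> carrier_mat n n" unfolding D_def by simp
  show ?thesis
  proof (rule eq_matI)
    fix i j assume "i < dim_row (W * D)" and "j < dim_col (W * D)"
    hence i: "i < n" and j: "j < n" using Wp(1) D by auto
    have "(A * W) $$ (i, j) = (A *\<^sub>v col W j) $ i" using i j A Wp(1) by simp
    also have "\<dots> = ls ! j * W $$ (i, j)"
      using Wp(4)[OF j] ev[OF j] i j vsc[OF j] Wp(1) index_col[of i W j] by simp
    also have "\<dots> = row W i \<bullet> (ls ! j \<cdot>\<^sub>v unit_vec n j)"
      using Wp(1) i j by (simp add: scalar_prod_smult_distrib)
    also have "ls ! j \<cdot>\<^sub>v unit_vec n j = col D j"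
      by (rule eq_vecI) (use j in \<open>auto simp: D_def\<close>)
    also have "row W i \<bullet> col D j = (W * D) $$ (i, j)" using i j Wp(1) D by simp
    finally show "(A * W) $$ (i, j) = (W * D) $$ (i, j)" .
  qed (use A Wp(1) D in auto)
qed

lemma char_poly_orthonormal_eigenbasis:
  assumes es: "orthonormal_eigenbasis A n vs ls" and A: "A \<in> carrier_mat n n"
  shows "char_poly A = (\<Prod>l\<leftarrow>ls. [:- l, 1:])"
proof -
  have onb: "orthonormal n vs" and lls: "length ls = n"
    using es unfolding orthonormal_eigenbasis_def by auto
  define W where "W = mat_of_cols n vs"
  note Wp = orthonormal_mat_of_cols[OF onb, folded W_def]
  define D where "D = mat n n (\<lambda>(i, j). if i = j then ls ! i else (0 :: real))"
  have D: "D \<in> carrier_mat n n" unfolding D_def by simp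
  have "A = A * (W * W\<^sup>T)" using Wp(3) A by simp
  also have "\<dots> = (A * W) * W\<^sup>T" using A Wp(1) by simp
  also have "\<dots> = W * D * W\<^sup>T"
    unfolding orthonormal_eigenbasis_diagonalizes[OF es A] W_def D_def ..
  finally have "similar_mat_wit A D W W\<^sup>T"
    unfolding similar_mat_wit_def using A D Wp by (auto simp: Let_def)
  hence "char_poly A = char_poly D" using char_poly_similar unfolding similar_mat_def by blast
  also have "\<dots> = (\<Prod>a\<leftarrow>diag_mat D. [:- a, 1:])"
    by (rule char_poly_upper_triangular[OF D]) (auto simp: upper_triangular_def D_def)
  also have "diag_mat D = ls" unfolding diag_mat_def D_def using lls
    by (simp add: list_eq_iff_nth_eq)
  finally show ?thesis .
qed

lemma orthonormal_eigenbasis_expansion: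
  assumes es: "orthonormal_eigenbasis A n vs ls" and A: "A \<in> carrier_mat n n"
    and x: "x \<in> carrier_vec n"
  shows "x \<bullet> x = (\<Sum>i<n. (vs ! i \<bullet> x)\<^sup>2)"
    and "x \<bullet> (A *\<^sub>v x) = (\<Sum>i<n. ls ! i * (vs ! i \<bullet> x)\<^sup>2)"
proof -
  have onb: "orthonormal n vs" using es unfolding orthonormal_eigenbasis_def by auto
  define W where "W = mat_of_cols n vs"
  define D where "D = mat n n (\<lambda>(i, j). if i = j then ls ! i else (0 :: real))"
  note Wp = orthonormal_mat_of_cols[OF onb, folded W_def]
  have D: "D \<in> carrier_mat n n" unfolding D_def by simp
  have AW: "A * W = W * D"
    unfolding W_def D_def by (rule orthonormal_eigenbasis_diagonalizes[OF es A])
  define c where "c = W\<^sup>T *\<^sub>v x"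
  have c: "c \<in> carrier_vec n" unfolding c_def using Wp(1) x by simp
  have c_nth: "c $ i = vs ! i \<bullet> x" if "i < n" for i
    unfolding c_def using that Wp(1) Wp(4)[OF that] x by simp
  have x_eq: "x = W *\<^sub>v c" unfolding c_def using Wp(1,3) x
    by (simp flip: assoc_mult_mat_vec[of _ n n _ n])
  have Dc: "D *\<^sub>v c = vec n (\<lambda>i. ls ! i * c $ i)"
  proof (rule eq_vecI)
    fix i assume "i < dim_vec (vec n (\<lambda>i. ls ! i * c $ i))"
    hence i: "i < n" by simp
    have "row D i = ls ! i \<cdot>\<^sub>v unit_vec n i" by (rule eq_vecI) (use i in \<open>auto simp: D_def\<close>)
    thus "(D *\<^sub>v c) $ i = vec n (\<lambda>i. ls ! i * c $ i) $ i"
      using i c D by (simp add: smult_scalar_prod_distrib)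
  qed (use D in simp)
  have Ax: "A *\<^sub>v x = W *\<^sub>v (D *\<^sub>v c)"
  proof -
    have "A *\<^sub>v x = (A * W) *\<^sub>v c" unfolding x_eq using A Wp(1) c by simp
    also have "\<dots> = W *\<^sub>v (D *\<^sub>v c)" unfolding AW using Wp(1) D c by simp
    finally show ?thesis .
  qed
  have "x \<bullet> (A *\<^sub>v x) = (W *\<^sub>v c) \<bullet> (W *\<^sub>v (D *\<^sub>v c))"
    unfolding Ax by (simp only: x_eq[symmetric])
  also have "\<dots> = c \<bullet> (D *\<^sub>v c)"
    by (rule orthogonal_mat_preserves_scalar_prod[OF Wp(1,2) c mult_mat_vec_carrier[OF D c]])
  also have "\<dots> = (\<Sum>i<n. c $ i * (ls ! i * c $ i))"
    unfolding Dc using c by (simp add: scalar_prod_def atLeast0LessThan)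
  also have "\<dots> = (\<Sum>i<n. ls ! i * (vs ! i \<bullet> x)\<^sup>2)"
    by (intro sum.cong refl) (simp add: c_nth power2_eq_square)
  finally show "x \<bullet> (A *\<^sub>v x) = (\<Sum>i<n. ls ! i * (vs ! i \<bullet> x)\<^sup>2)" .
  have "x \<bullet> x = (W *\<^sub>v c) \<bullet> (W *\<^sub>v c)" by (simp only: x_eq[symmetric])
  also have "\<dots> = c \<bullet> c" by (rule orthogonal_mat_preserves_scalar_prod[OF Wp(1,2) c c])
  also have "\<dots> = (\<Sum>i<n. c $ i * c $ i)" using c by (simp add: scalar_prod_def atLeast0LessThan)
  also have "\<dots> = (\<Sum>i<n. (vs ! i \<bullet> x)\<^sup>2)"
    by (intro sum.cong refl) (simp add: c_nth power2_eq_square)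
  finally show "x \<bullet> x = (\<Sum>i<n. (vs ! i \<bullet> x)\<^sup>2)" .
qed

section \<open>The quadratic form of \<open>P\<close>\<close>

definition sum_squares :: "nat \<Rightarrow> (nat \<Rightarrow> real) \<Rightarrow> real" where
  "sum_squares n f = (\<Sum>u<n. (f u)\<^sup>2)"

text \<open>Every edge is counted twice, once for each orientation.\<close>

definition graph_energy :: "nat \<Rightarrow> (nat \<Rightarrow> nat \<Rightarrow> bool) \<Rightarrow> (nat \<Rightarrow> real) \<Rightarrow> real" where
  "graph_energy n E f = (\<Sum>u<n. \<Sum>v<n. if E u v then (f u - f v)\<^sup>2 else 0)"

lemma graph_energy_nonneg: "graph_energy n E f \<ge> 0"
  unfolding graph_energy_def by (intro sum_nonneg) auto

lemma finite_edge_set: "finite (edge_set n E)"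
proof -
  have "edge_set n E \<subseteq> (\<lambda>(u, v). {u, v}) ` ({..<n} \<times> {..<n})"
    unfolding edge_set_def by auto
  thus ?thesis by (rule finite_subset) auto
qed

locale regular_connected_graph =
  fixes n :: nat and E :: "nat \<Rightarrow> nat \<Rightarrow> bool" and d :: nat
  assumes simple: "simple_graph n E" and connected: "connected_graph n E"
    and regular: "regular_graph n E d" and two_le_n: "n \<ge> 2"
begin

lemma edge_less: "E u v \<Longrightarrow> u < n \<and> v < n"
  using simple unfolding simple_graph_def by auto

lemma edge_sym: "E u v \<Longrightarrow> E v u"
  using simple unfolding simple_graph_def by auto

lemma edge_irrefl: "\<not> E u u"
  using simple unfolding simple_graph_def by auto

lemma neighbour_count_eq_degree: "u < n \<Longrightarrow> (\<Sum>v<n. if E u v then 1 else 0 :: real) = real d"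
  using regular unfolding regular_graph_def graph_deg_def
  by (simp add: sum.If_cases Int_def lessThan_def conj_commute)

lemma degree_pos: "d > 0"
proof -
  have "E\<^sup>*\<^sup>* 0 1" using connected two_le_n unfolding connected_graph_def by auto
  then obtain w where "E 0 w" by (metis converse_rtranclpE zero_neq_one)
  hence "w \<in> {v. v < n \<and> E 0 v}" using edge_less by auto
  hence "card {v. v < n \<and> E 0 v} > 0" by (subst card_gt_0_iff) auto
  thus ?thesis using regular two_le_n unfolding regular_graph_def graph_deg_def by auto
qed

lemma max_deg_eq: "max_deg n E = d"
proof -
  have "graph_deg n E ` {..<n} = (\<lambda>_. d) ` {..<n}"
    by (rule image_cong) (use regular in \<open>auto simp: regular_graph_def\<close>)
  also have "\<dots> = {d}" using two_le_n by (subst image_constant_conv) (auto simp: lessThan_empty_iff)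
  finally have "graph_deg n E ` {..<n} = {d}" .
  thus ?thesis unfolding max_deg_def by simp
qed

abbreviation P where "P \<equiv> P_mat n E"

lemma P_carrier: "P \<in> carrier_mat n n"
  unfolding P_mat_def by simp

lemma P_entry: "u < n \<Longrightarrow> v < n \<Longrightarrow>
  P $$ (u, v) = (if u = v then 1/2 else 0) + (if E u v then 1 / (2 * real d) else 0)"
  unfolding P_mat_def using max_deg_eq regular degree_pos edge_irrefl
  by (auto simp: regular_graph_def)

lemma P_symmetric: "P\<^sup>T = P"
  by (rule eq_matI) (use P_carrier edge_sym in \<open>auto simp: P_entry\<close>)

lemma P_row_sum:
  assumes u: "u < n"
  shows "(\<Sum>v<n. P $$ (u, v) * g v) = g u / 2 + (\<Sum>v<n. if E u v then g v else 0) / (2 * real d)"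
proof -
  have "(\<Sum>v<n. P $$ (u, v) * g v) =
      (\<Sum>v<n. (if u = v then g u / 2 else 0) + (if E u v then g v / (2 * real d) else 0))"
    using u edge_irrefl by (intro sum.cong) (auto simp: P_entry)
  also have "\<dots> = g u / 2 + (\<Sum>v<n. if E u v then g v / (2 * real d) else 0)"
    using u by (simp add: sum.distrib)
  also have "(\<Sum>v<n. if E u v then g v / (2 * real d) else 0) =
      (\<Sum>v<n. if E u v then g v else 0) / (2 * real d)"
    unfolding sum_divide_distrib by (intro sum.cong) auto
  finally show ?thesis .
qed

lemma P_quadratic_form:
  "vec n f \<bullet> (P *\<^sub>v vec n f) = sum_squares n f - graph_energy n E f / (4 * real d)"
proof -
  define S where "S = (\<Sum>u<n. \<Sum>v<n. if E u v then f u * f v else 0)"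
  have "vec n f \<bullet> (P *\<^sub>v vec n f) = (\<Sum>u<n. f u * (\<Sum>v<n. P $$ (u, v) * f v))"
    using P_carrier by (auto simp: scalar_prod_def atLeast0LessThan intro!: sum.cong)
  also have "\<dots> = (\<Sum>u<n. (f u)\<^sup>2 / 2 + (\<Sum>v<n. if E u v then f u * f v else 0) / (2 * real d))"
    by (intro sum.cong refl) (simp add: P_row_sum sum_distrib_left power2_eq_square if_distrib
        ring_distribs cong: if_cong)
  also have "\<dots> = sum_squares n f / 2 + S / (2 * real d)"
    unfolding sum_squares_def S_def by (simp add: sum.distrib sum_divide_distrib)
  finally have form: "vec n f \<bullet> (P *\<^sub>v vec n f) = sum_squares n f / 2 + S / (2 * real d)" .
  have left: "(\<Sum>u<n. \<Sum>v<n. if E u v then (f u)\<^sup>2 else 0) = real d * sum_squares n f"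
  proof -
    have "(\<Sum>u<n. \<Sum>v<n. if E u v then (f u)\<^sup>2 else 0) =
        (\<Sum>u<n. (f u)\<^sup>2 * (\<Sum>v<n. if E u v then 1 else 0))"
      by (simp add: sum_distrib_left if_distrib cong: if_cong)
    also have "\<dots> = (\<Sum>u<n. (f u)\<^sup>2 * real d)" by (intro sum.cong) (auto simp: neighbour_count_eq_degree)
    finally show ?thesis unfolding sum_squares_def by (simp add: sum_distrib_left mult.commute)
  qed
  have right: "(\<Sum>u<n. \<Sum>v<n. if E u v then (f v)\<^sup>2 else 0) = real d * sum_squares n f"
  proof -
    have "(\<Sum>u<n. \<Sum>v<n. if E u v then (f v)\<^sup>2 else 0) = (\<Sum>v<n. \<Sum>u<n. if E v u then (f v)\<^sup>2 else 0)"
      by (subst sum.swap) (intro sum.cong refl, metis edge_sym)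
    thus ?thesis using left by simp
  qed
  have "graph_energy n E f = (\<Sum>u<n. \<Sum>v<n. (if E u v then (f u)\<^sup>2 else 0) + (if E u v then (f v)\<^sup>2 else 0)
        - 2 * (if E u v then f u * f v else 0))"
    unfolding graph_energy_def by (intro sum.cong refl) (simp add: power2_diff)
  also have "\<dots> = 2 * real d * sum_squares n f - 2 * S"
    unfolding S_def using left right by (simp add: sum.distrib sum_subtractf sum_distrib_left)
  finally show ?thesis using form degree_pos by (simp add: field_simps)
qed

lemma graph_energy_eq_0_imp_const:
  assumes "graph_energy n E f = 0" "u < n" "v < n"
  shows "f u = f v"
proof -
  have edge: "f a = f b" if "E a b" for a b
  proof -
    have ab: "a < n" "b < n" using edge_less[OF that] by auto
    have "\<forall>a\<in>{..<n}. (\<Sum>b<n. if E a b then (f a - f b)\<^sup>2 else 0) = 0"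
      using assms(1) unfolding graph_energy_def
      by (subst sum_nonneg_eq_0_iff[symmetric]) (auto intro!: sum_nonneg)
    hence "(\<Sum>b<n. if E a b then (f a - f b)\<^sup>2 else 0) = 0" using ab by auto
    hence "\<forall>b\<in>{..<n}. (if E a b then (f a - f b)\<^sup>2 else 0) = 0"
      by (subst sum_nonneg_eq_0_iff[symmetric]) auto
    hence "(f a - f b)\<^sup>2 = 0" using ab that by force
    thus ?thesis by simp
  qed
  have "E\<^sup>*\<^sup>* u v" using connected assms unfolding connected_graph_def by auto
  thus ?thesis by (induct rule: rtranclp_induct) (auto dest: edge)
qed

end

lemma orthonormal_no_two_constant:
  assumes onb: "orthonormal n vs" and ij: "i < n" "j < n" "i \<noteq> j"
    and const: "\<And>u. u < n \<Longrightarrow> vs ! i $ u = a" "\<And>u. u < n \<Longrightarrow> vs ! j $ u = b"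
  shows False
proof -
  have vsc: "vs ! i \<in> carrier_vec n" "vs ! j \<in> carrier_vec n"
    using onb ij unfolding orthonormal_def by auto
  have "vs ! i \<bullet> vs ! i = 1" "vs ! i \<bullet> vs ! j = 0" "vs ! j \<bullet> vs ! j = 1"
    using onb ij unfolding orthonormal_def by auto
  moreover have "vs ! k \<bullet> vs ! l = real n * c * c'"
    if "k < n" "l < n" "\<And>u. u < n \<Longrightarrow> vs ! k $ u = c" "\<And>u. u < n \<Longrightarrow> vs ! l $ u = c'"
    and "vs ! k \<in> carrier_vec n" "vs ! l \<in> carrier_vec n" for k l c c'
    using that by (simp add: scalar_prod_def)
  ultimately have aa: "real n * a * a = 1" and ab: "real n * a * b = 0" and bb: "real n * b * b = 1"
    using ij const vsc by metis+
  from aa have "real n * a \<noteq> 0" by (metis mult_zero_left zero_neq_one)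
  with ab have "b = 0" by simp
  with bb show False by simp
qed

lemma second_of_sorted_desc_lt:
  fixes ls :: "real list"
  assumes le: "\<forall>l\<in>set ls. l \<le> c" and mem: "c \<in> set ls" and simple: "count (mset ls) c \<le> 1"
    and len: "length ls \<ge> 2"
  defines "xs \<equiv> rev (sort ls)"
  shows "xs ! 1 < c" and "\<And>l. l \<in> set ls \<Longrightarrow> xs ! 1 < l \<Longrightarrow> l = c"
proof -
  have sorted: "sorted_wrt (\<ge>) xs" unfolding xs_def by (simp add: sorted_wrt_rev)
  have set_xs: "set xs = set ls" and len_xs: "length xs = length ls" unfolding xs_def by auto
  have first: "xs ! 0 = c"
  proof -
    obtain k where k: "k < length xs" "xs ! k = c" using mem set_xs by (metis in_set_conv_nth)
    have "xs ! 0 \<in> set xs" using len len_xs by (intro nth_mem) auto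
    hence "xs ! 0 \<le> c" using le set_xs by auto
    moreover have "xs ! 0 \<ge> xs ! k" using sorted_wrt_nth_less[OF sorted, of 0 k] k by (cases k) auto
    ultimately show ?thesis using k by simp
  qed
  show second: "xs ! 1 < c"
  proof (rule ccontr)
    assume "\<not> xs ! 1 < c"
    moreover have "xs ! 1 \<in> set xs" using len len_xs by (intro nth_mem) auto
    ultimately have "xs ! 1 = c" using le set_xs by force
    moreover obtain a b rest where "xs = a # b # rest" using len len_xs
      by (cases xs; cases "tl xs") auto
    ultimately have "count (mset xs) c \<ge> 2" using first by simp
    thus False using simple unfolding xs_def by simp
  qed
  fix l assume "l \<in> set ls" and "xs ! 1 < l"
  then obtain k where k: "k < length xs" "xs ! k = l" using set_xs by (metis in_set_conv_nth)
  have "k = 0"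
  proof (rule ccontr)
    assume "k \<noteq> 0"
    hence "xs ! 1 \<ge> xs ! k" using sorted_wrt_nth_less[OF sorted, of 1 k] k by (cases "k = 1") auto
    thus False using k \<open>xs ! 1 < l\<close> by simp
  qed
  thus "l = c" using k first by simp
qed

context regular_connected_graph
begin

lemma P_unit_eigenvector:
  assumes x: "x \<in> carrier_vec n" "x \<bullet> x = 1" and ev: "P *\<^sub>v x = l \<cdot>\<^sub>v x"
  shows "l = 1 - graph_energy n E (\<lambda>u. x $ u) / (4 * real d)"
proof -
  have "vec n (\<lambda>u. x $ u) = x" using x by (intro eq_vecI) auto
  moreover have "x \<bullet> (P *\<^sub>v x) = l" using ev x by (simp add: scalar_prod_smult_distrib)
  moreover have "sum_squares n (\<lambda>u. x $ u) = 1"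
    using x by (auto simp: sum_squares_def scalar_prod_def atLeast0LessThan power2_eq_square)
  ultimately show ?thesis using P_quadratic_form[of "\<lambda>u. x $ u"] by simp
qed

lemma P_ones_eigenvector: "P *\<^sub>v vec n (\<lambda>_. 1) = 1 \<cdot>\<^sub>v vec n (\<lambda>_. 1)"
proof (rule eq_vecI)
  fix u assume "u < dim_vec (1 \<cdot>\<^sub>v vec n (\<lambda>_. 1 :: real))"
  hence u: "u < n" by simp
  have "(P *\<^sub>v vec n (\<lambda>_. 1)) $ u = (\<Sum>v<n. P $$ (u, v) * 1)"
    using u P_carrier by (auto simp: scalar_prod_def atLeast0LessThan)
  also have "\<dots> = 1" using P_row_sum[OF u, of "\<lambda>_. 1"] neighbour_count_eq_degree[OF u] degree_pos by simp
  finally show "(P *\<^sub>v vec n (\<lambda>_. 1)) $ u = (1 \<cdot>\<^sub>v vec n (\<lambda>_. 1)) $ u" using u by simp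
qed (use P_carrier in simp)

lemma P_eigenvalue_one: "eigenvalue P 1"
proof -
  define one where "one = vec n (\<lambda>_. 1 :: real)"
  have "one \<noteq> 0\<^sub>v n"
  proof
    assume "one = 0\<^sub>v n"
    hence "one $ 0 = 0\<^sub>v n $ 0" by simp
    thus False using two_le_n unfolding one_def by simp
  qed
  moreover have "one \<in> carrier_vec n" "dim_row P = n" "P *\<^sub>v one = 1 \<cdot>\<^sub>v one"
    using P_carrier P_ones_eigenvector unfolding one_def by auto
  ultimately have "eigenvector P one 1" unfolding eigenvector_def by simp
  thus ?thesis unfolding eigenvalue_def by blast
qed

lemma P_eigenbasis_eigenvalue_le_one:
  assumes es: "orthonormal_eigenbasis P n vs ls" and i: "i < n"
  shows "ls ! i \<le> 1" and "ls ! i = 1 \<Longrightarrow> \<forall>u<n. vs ! i $ u = vs ! i $ 0"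
proof -
  have energy: "ls ! i = 1 - graph_energy n E (\<lambda>u. vs ! i $ u) / (4 * real d)"
    using es i unfolding orthonormal_eigenbasis_def orthonormal_def
    by (intro P_unit_eigenvector) auto
  thus "ls ! i \<le> 1" using graph_energy_nonneg degree_pos by simp
  assume "ls ! i = 1"
  hence zero: "graph_energy n E (\<lambda>u. vs ! i $ u) = 0" using energy degree_pos by simp
  show "\<forall>u<n. vs ! i $ u = vs ! i $ 0"
  proof (intro allI impI)
    fix u assume "u < n"
    show "vs ! i $ u = vs ! i $ 0"
      by (rule graph_energy_eq_0_imp_const[OF zero \<open>u < n\<close>]) (use two_le_n in simp)
  qed
qed

text \<open>Connectivity makes 1 a simple eigenvalue: its eigenvectors are constant, and two
  orthonormal vectors cannot both be constant.\<close>

lemma P_eigenbasis_one_simple: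
  assumes es: "orthonormal_eigenbasis P n vs ls"
  shows "1 \<in> set ls" and "count (mset ls) 1 \<le> 1"
proof -
  have onb: "orthonormal n vs" and lls: "length ls = n"
    using es unfolding orthonormal_eigenbasis_def by auto
  note const = P_eigenbasis_eigenvalue_le_one(2)[OF es]
  have "poly (char_poly P) 1 = 0" using P_eigenvalue_one eigenvalue_root_char_poly[OF P_carrier] by blast
  thus "1 \<in> set ls"
    unfolding char_poly_orthonormal_eigenbasis[OF es P_carrier] poly_prod_linear_factors_eq_0_iff .
  show "count (mset ls) 1 \<le> 1"
  proof (rule ccontr)
    assume "\<not> count (mset ls) 1 \<le> 1"
    moreover have "count (mset ls) 1 = card {k. k < n \<and> ls ! k = 1}"
      unfolding count_mset count_list_eq_length_filter length_filter_conv_card lls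
      by (rule arg_cong[where f = card]) auto
    ultimately have two: "card {k. k < n \<and> ls ! k = 1} \<ge> 2" by simp
    hence "{k. k < n \<and> ls ! k = 1} \<noteq> {}" by (intro notI) simp
    then obtain i where i: "i \<in> {k. k < n \<and> ls ! k = 1}" by blast
    have "{k. k < n \<and> ls ! k = 1} \<noteq> {i}" using two by (intro notI) simp
    then obtain j where "j \<in> {k. k < n \<and> ls ! k = 1}" "j \<noteq> i" using i by blast
    hence ij: "i < n" "j < n" "i \<noteq> j" "ls ! i = 1" "ls ! j = 1" using i by auto
    have "\<forall>u<n. vs ! i $ u = vs ! i $ 0" "\<forall>u<n. vs ! j $ u = vs ! j $ 0"
      using const[OF ij(1,4)] const[OF ij(2,5)] .
    thus False using orthonormal_no_two_constant[OF onb ij(1-3)] by blast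
  qed
qed

lemma P_eigenbasis_second_eigenvalue:
  assumes es: "orthonormal_eigenbasis P n vs ls"
  shows "lambda2 P = rev (sort ls) ! 1" and "rev (sort ls) ! 1 < 1"
    and "\<And>i. i < n \<Longrightarrow> rev (sort ls) ! 1 < ls ! i \<Longrightarrow> \<exists>a. \<forall>u<n. vs ! i $ u = a"
proof -
  have lls: "length ls = n" using es unfolding orthonormal_eigenbasis_def by auto
  show "lambda2 P = rev (sort ls) ! 1"
    unfolding lambda2_def eigenvalues_desc_eq[OF char_poly_orthonormal_eigenbasis[OF es P_carrier]] ..
  have "\<forall>l\<in>set ls. l \<le> 1"
    using P_eigenbasis_eigenvalue_le_one(1)[OF es] lls by (auto simp: in_set_conv_nth)
  note second = second_of_sorted_desc_lt[OF this P_eigenbasis_one_simple[OF es], unfolded lls,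
      OF two_le_n]
  show "rev (sort ls) ! 1 < 1" by (rule second(1))
  fix i assume i: "i < n" and above: "rev (sort ls) ! 1 < ls ! i"
  have "ls ! i = 1" using second(2)[OF nth_mem above] i lls by simp
  with P_eigenbasis_eigenvalue_le_one(2)[OF es i] show "\<exists>a. \<forall>u<n. vs ! i $ u = a" by blast
qed

lemma lambda2_P_lt_one: "lambda2 P < 1"
proof -
  obtain vs ls where "orthonormal_eigenbasis P n vs ls"
    using real_symmetric_orthonormal_eigenbasis[OF P_carrier P_symmetric] by blast
  from P_eigenbasis_second_eigenvalue(1,2)[OF this] show ?thesis by simp
qed

lemma graph_energy_ge_spectral_gap:
  assumes f: "(\<Sum>u<n. f u) = 0"
  shows "graph_energy n E f \<ge> 4 * real d * (1 - lambda2 P) * sum_squares n f"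
proof -
  obtain vs ls where es: "orthonormal_eigenbasis P n vs ls"
    using real_symmetric_orthonormal_eigenbasis[OF P_carrier P_symmetric] by blast
  note gap = P_eigenbasis_second_eigenvalue[OF es]
  have vsc: "\<And>i. i < n \<Longrightarrow> vs ! i \<in> carrier_vec n"
    using es unfolding orthonormal_eigenbasis_def orthonormal_def by auto
  define x where "x = vec n f"
  have x: "x \<in> carrier_vec n" unfolding x_def by simp
  note expansion = orthonormal_eigenbasis_expansion[OF es P_carrier x]
  have summand_le: "ls ! i * (vs ! i \<bullet> x)\<^sup>2 \<le> lambda2 P * (vs ! i \<bullet> x)\<^sup>2" if i: "i < n" for i
  proof (cases "ls ! i \<le> lambda2 P")
    case True thus ?thesis by (simp add: mult_right_mono)
  next
    case False
    then obtain a where a: "\<forall>u<n. vs ! i $ u = a" using gap(3)[OF i] gap(1) by auto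
    have "vs ! i \<bullet> x = (\<Sum>u<n. a * f u)"
      using vsc[OF i] a by (auto simp: scalar_prod_def x_def atLeast0LessThan intro!: sum.cong)
    also have "\<dots> = 0" using f by (simp flip: sum_distrib_left)
    finally show ?thesis by simp
  qed
  have "x \<bullet> (P *\<^sub>v x) \<le> lambda2 P * (x \<bullet> x)"
    unfolding expansion sum_distrib_left by (intro sum_mono summand_le) simp
  moreover have "x \<bullet> x = sum_squares n f" unfolding x_def sum_squares_def
    by (auto simp: scalar_prod_def atLeast0LessThan power2_eq_square)
  ultimately show ?thesis using P_quadratic_form[of f] degree_pos unfolding x_def
    by (simp add: field_simps)
qed

end

section \<open>One round of the process\<close>

definition matching_energy :: "nat \<Rightarrow> nat set set \<Rightarrow> (nat \<Rightarrow> real) \<Rightarrow> real" where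
  "matching_energy n M x = (\<Sum>v<n. \<Sum>w<n. if {v, w} \<in> M then (x v - x w)\<^sup>2 else 0)"

lemma sum_pairs_swap:
  fixes g :: "nat \<Rightarrow> nat \<Rightarrow> real"
  shows "(\<Sum>v<n. \<Sum>w<n. if {v, w} \<in> M then g v w else 0) =
    (\<Sum>v<n. \<Sum>w<n. if {v, w} \<in> M then g w v else 0)"
  by (subst sum.swap) (simp add: insert_commute)

lemma sum_pairs_antisym_eq_0:
  fixes g :: "nat \<Rightarrow> nat \<Rightarrow> real"
  assumes "\<And>v w. g v w + g w v = 0"
  shows "(\<Sum>v<n. \<Sum>w<n. if {v, w} \<in> M then g v w else 0) = 0"
proof -
  let ?S = "\<Sum>v<n. \<Sum>w<n. if {v, w} \<in> M then g v w else 0"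
  have "2 * ?S = ?S + (\<Sum>v<n. \<Sum>w<n. if {v, w} \<in> M then g w v else 0)"
    using sum_pairs_swap[where g = g and M = M and n = n] by simp
  also have "\<dots> = (\<Sum>v<n. \<Sum>w<n. if {v, w} \<in> M then g v w + g w v else 0)"
    by (simp only: sum.distrib[symmetric]) (intro sum.cong refl, simp)
  also have "\<dots> = 0" by (simp add: assms)
  finally show ?thesis by simp
qed

context regular_connected_graph
begin

lemma matching_edge:
  assumes "is_matching n E M" "{v, w} \<in> M"
  shows "v < n \<and> w < n \<and> v \<noteq> w \<and> E v w"
proof -
  have "{v, w} \<in> edge_set n E" using assms unfolding is_matching_def by auto
  then obtain a b where ab: "{v, w} = {a, b}" "a < n" "b < n" "E a b"
    unfolding edge_set_def by auto
  have "a \<noteq> b" using ab(4) edge_irrefl by auto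
  from ab(1) have "(v = a \<and> w = b) \<or> (v = b \<and> w = a)" by (simp add: doubleton_eq_iff)
  thus ?thesis
  proof
    assume "v = a \<and> w = b" thus ?thesis using ab \<open>a \<noteq> b\<close> by simp
  next
    assume "v = b \<and> w = a" thus ?thesis using ab \<open>a \<noteq> b\<close> edge_sym[OF ab(4)] by simp
  qed
qed

lemma matching_partner_unique:
  assumes M: "is_matching n E M" and vw: "{v, w} \<in> M" and vw': "{v, w'} \<in> M"
  shows "w = w'"
proof (rule ccontr)
  assume ww': "w \<noteq> w'"
  have "v \<noteq> w" using matching_edge[OF M vw] by auto
  have ne: "{v, w} \<noteq> {v, w'}"
  proof
    assume eq: "{v, w} = {v, w'}"
    have "w \<in> {v, w'}" unfolding eq[symmetric] by simp
    thus False using \<open>v \<noteq> w\<close> ww' by simp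
  qed
  have "\<forall>e\<in>M. \<forall>e'\<in>M. e \<noteq> e' \<longrightarrow> e \<inter> e' = {}" using M unfolding is_matching_def by simp
  hence "\<forall>e'\<in>M. {v, w} \<noteq> e' \<longrightarrow> {v, w} \<inter> e' = {}" using vw by (rule bspec)
  hence "{v, w} \<noteq> {v, w'} \<longrightarrow> {v, w} \<inter> {v, w'} = {}" using vw' by (rule bspec)
  hence "{v, w} \<inter> {v, w'} = {}" using ne by (rule mp)
  thus False by simp
qed

text \<open>A matched node moves half way towards its partner, changing its square by
  \<open>((x v + x w) / 2)\<^sup>2 - (x v)\<^sup>2\<close>; the sums over \<open>w\<close> have at most one nonzero term.\<close>

lemma cont_step_matching:
  assumes M: "is_matching n E M" and v: "v < n"
  shows "cont_step n M x v = x v + (\<Sum>w<n. if {v, w} \<in> M then (x w - x v) / 2 else 0)"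
    and "(cont_step n M x v)\<^sup>2 =
      (x v)\<^sup>2 + (\<Sum>w<n. if {v, w} \<in> M then (x v + x w)\<^sup>2 / 4 - (x v)\<^sup>2 else 0)"
proof -
  have "cont_step n M x v = x v + (\<Sum>w<n. if {v, w} \<in> M then (x w - x v) / 2 else 0) \<and>
    (cont_step n M x v)\<^sup>2 = (x v)\<^sup>2 + (\<Sum>w<n. if {v, w} \<in> M then (x v + x w)\<^sup>2 / 4 - (x v)\<^sup>2 else 0)"
  proof (cases "\<exists>w. {v, w} \<in> M")
    case True
    then obtain w where w: "{v, w} \<in> M" by blast
    have wn: "w < n" and vw: "v \<noteq> w" using matching_edge[OF M w] by auto
    have partner: "{v, w'} \<in> M \<longleftrightarrow> w' = w" for w'
    proof
      assume "{v, w'} \<in> M"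
      thus "w' = w" using matching_partner_unique[OF M w] by simp
    qed (use w in simp)
    have "{u, v} \<in> M \<longleftrightarrow> u = w" for u
      using partner[of u] by (simp add: insert_commute)
    hence "matching_matrix M u v = (if u = v then 1/2 else if u = w then 1/2 else 0)" for u
      using True unfolding matching_matrix_def by simp
    hence "cont_step n M x v = (\<Sum>u<n. (if u = v then x v / 2 else 0) + (if u = w then x w / 2 else 0))"
      unfolding cont_step_def using vw by (intro sum.cong) auto
    also have "\<dots> = x v / 2 + x w / 2" using v wn by (simp add: sum.distrib)
    finally have step: "cont_step n M x v = x v / 2 + x w / 2" .
    have sum_partner: "(\<Sum>w'<n. if {v, w'} \<in> M then g w' else 0) = g w" for g :: "nat \<Rightarrow> real"
      using wn by (simp add: partner)
    show ?thesis unfolding step sum_partner by (simp add: field_simps power2_eq_square)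
  next
    case False
    have "{u, v} \<notin> M" for u
    proof
      assume "{u, v} \<in> M"
      hence "{v, u} \<in> M" by (simp add: insert_commute)
      thus False using False by blast
    qed
    hence "matching_matrix M u v = (if u = v then 1 else 0)" for u
      using False unfolding matching_matrix_def by simp
    hence "cont_step n M x v = (\<Sum>u<n. if u = v then x v else 0)"
      unfolding cont_step_def by (intro sum.cong) auto
    hence "cont_step n M x v = x v" using v by simp
    thus ?thesis using False by simp
  qed
  thus "cont_step n M x v = x v + (\<Sum>w<n. if {v, w} \<in> M then (x w - x v) / 2 else 0)"
    and "(cont_step n M x v)\<^sup>2 =
      (x v)\<^sup>2 + (\<Sum>w<n. if {v, w} \<in> M then (x v + x w)\<^sup>2 / 4 - (x v)\<^sup>2 else 0)"
    by auto
qed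

lemma sum_cont_step:
  assumes M: "is_matching n E M"
  shows "(\<Sum>v<n. cont_step n M x v) = (\<Sum>v<n. x v)"
proof -
  have "(\<Sum>v<n. cont_step n M x v) =
      (\<Sum>v<n. x v + (\<Sum>w<n. if {v, w} \<in> M then (x w - x v) / 2 else 0))"
    using cont_step_matching(1)[OF M] by (intro sum.cong) auto
  also have "\<dots> = (\<Sum>v<n. x v) + (\<Sum>v<n. \<Sum>w<n. if {v, w} \<in> M then (x w - x v) / 2 else 0)"
    by (simp add: sum.distrib)
  also have "(\<Sum>v<n. \<Sum>w<n. if {v, w} \<in> M then (x w - x v) / 2 else 0) = 0"
    by (rule sum_pairs_antisym_eq_0) (simp add: diff_divide_distrib)
  finally show ?thesis by simp
qed

lemma sum_squares_cont_step:
  assumes M: "is_matching n E M"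
  shows "sum_squares n (cont_step n M x) = sum_squares n x - matching_energy n M x / 4"
proof -
  have "sum_squares n (cont_step n M x) =
      (\<Sum>v<n. (x v)\<^sup>2 + (\<Sum>w<n. if {v, w} \<in> M then (x v + x w)\<^sup>2 / 4 - (x v)\<^sup>2 else 0))"
    unfolding sum_squares_def using cont_step_matching(2)[OF M] by (intro sum.cong) auto
  also have "\<dots> = sum_squares n x +
      (\<Sum>v<n. \<Sum>w<n. if {v, w} \<in> M then (x v + x w)\<^sup>2 / 4 - (x v)\<^sup>2 else 0)"
    unfolding sum_squares_def by (simp add: sum.distrib)
  also have "(\<Sum>v<n. \<Sum>w<n. if {v, w} \<in> M then (x v + x w)\<^sup>2 / 4 - (x v)\<^sup>2 else 0) =
      (\<Sum>v<n. \<Sum>w<n. (if {v, w} \<in> M then (x w)\<^sup>2 / 2 - (x v)\<^sup>2 / 2 else 0)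
        - (if {v, w} \<in> M then (x v - x w)\<^sup>2 / 4 else 0))"
    by (intro sum.cong refl) (auto simp: power2_eq_square field_simps)
  also have "\<dots> = (\<Sum>v<n. \<Sum>w<n. if {v, w} \<in> M then (x w)\<^sup>2 / 2 - (x v)\<^sup>2 / 2 else 0)
      - (\<Sum>v<n. \<Sum>w<n. if {v, w} \<in> M then (x v - x w)\<^sup>2 / 4 else 0)"
    by (simp only: sum_subtractf)
  also have "(\<Sum>v<n. \<Sum>w<n. if {v, w} \<in> M then (x w)\<^sup>2 / 2 - (x v)\<^sup>2 / 2 else 0) = 0"
    by (rule sum_pairs_antisym_eq_0) simp
  also have "(\<Sum>v<n. \<Sum>w<n. if {v, w} \<in> M then (x v - x w)\<^sup>2 / 4 else 0) = matching_energy n M x / 4"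
    unfolding matching_energy_def sum_divide_distrib by (intro sum.cong refl) auto
  finally show ?thesis by simp
qed

end

section \<open>The potential\<close>

definition sq_deviation :: "nat \<Rightarrow> (nat \<Rightarrow> real) \<Rightarrow> real" where
  "sq_deviation n x = sum_squares n (\<lambda>v. x v - (\<Sum>u<n. x u) / real n)"

lemma sq_deviation_nonneg: "sq_deviation n x \<ge> 0"
  unfolding sq_deviation_def sum_squares_def by (intro sum_nonneg) auto

lemma sq_deviation_eq: "n > 0 \<Longrightarrow> sq_deviation n x = sum_squares n x - (\<Sum>u<n. x u)\<^sup>2 / real n"
proof -
  assume n: "n > 0"
  define S where "S = (\<Sum>u<n. x u)"
  have "sq_deviation n x = (\<Sum>v<n. (x v)\<^sup>2 - 2 * (S / real n) * x v + (S / real n)\<^sup>2)"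
    unfolding sq_deviation_def sum_squares_def S_def by (intro sum.cong refl) (simp add: power2_diff)
  also have "\<dots> = sum_squares n x - 2 * (S / real n) * S + real n * (S / real n)\<^sup>2"
    unfolding sum_squares_def S_def by (simp add: sum.distrib sum_subtractf sum_distrib_left)
  also have "\<dots> = sum_squares n x - S\<^sup>2 / real n" using n by (simp add: field_simps power2_eq_square)
  finally show ?thesis unfolding S_def .
qed

lemma sq_deviation_unit:
  assumes "w < n"
  shows "sq_deviation n (\<lambda>u. if u = w then 1 else 0) = 1 - 1 / real n"
proof -
  have sum: "(\<Sum>u<n. if u = w then 1 else 0 :: real) = 1" using assms by simp
  have "sum_squares n (\<lambda>u. if u = w then 1 else 0) = (\<Sum>u<n. if u = w then 1 else 0 :: real)"
    unfolding sum_squares_def by (intro sum.cong refl) auto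
  thus ?thesis using assms sum by (simp add: sq_deviation_eq)
qed

lemma discrepancy_le_iff:
  assumes "n > 0"
  shows "discrepancy n \<xi> \<le> c \<longleftrightarrow> (\<forall>a<n. \<forall>b<n. \<bar>\<xi> a - \<xi> b\<bar> \<le> c)"
proof -
  have "finite {\<bar>\<xi> u - \<xi> v\<bar> | u v. u < n \<and> v < n}"
    by (rule finite_image_set2) auto
  moreover have "{\<bar>\<xi> u - \<xi> v\<bar> | u v. u < n \<and> v < n} \<noteq> {}" using assms by blast
  ultimately show ?thesis unfolding discrepancy_def by (auto simp: Max_le_iff)
qed

lemma sum_abs_squared_le:
  fixes a :: "nat \<Rightarrow> real"
  shows "(\<Sum>w<n. \<bar>a w\<bar>)\<^sup>2 \<le> real n * (\<Sum>w<n. (a w)\<^sup>2)"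
  using Cauchy_Schwarz_ineq_sum[of "\<lambda>w. \<bar>a w\<bar>" "\<lambda>_. 1" "{..<n}"] by (simp add: mult.commute)

text \<open>\<open>unit_trajectory n ms w t\<close> is row \<open>w\<close> of \<open>M\<^sup>(\<^sup>1\<^sup>) \<cdots> M\<^sup>(\<^sup>t\<^sup>)\<close>, the load vector
  after \<open>t\<close> rounds when all load starts on node \<open>w\<close>.\<close>

definition unit_trajectory :: "nat \<Rightarrow> (nat \<Rightarrow> nat set set) \<Rightarrow> nat \<Rightarrow> nat \<Rightarrow> (nat \<Rightarrow> real)" where
  "unit_trajectory n ms w t = cont_proc n ms 0 (\<lambda>u. if u = w then 1 else 0) t"

definition potential :: "nat \<Rightarrow> (nat \<Rightarrow> nat set set) \<Rightarrow> nat \<Rightarrow> real" where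
  "potential n ms t = (\<Sum>w<n. sq_deviation n (unit_trajectory n ms w t))"

lemma potential_nonneg: "potential n ms t \<ge> 0"
  unfolding potential_def by (intro sum_nonneg sq_deviation_nonneg)

lemma cont_proc_cong:
  "(\<And>i. 1 \<le> i \<Longrightarrow> i \<le> t \<Longrightarrow> ms i = ms' i) \<Longrightarrow> cont_proc n ms 0 \<xi> t = cont_proc n ms' 0 \<xi> t"
  by (induct t) auto

lemma cont_proc_eq_sum_unit_trajectory:
  "v < n \<Longrightarrow> cont_proc n ms 0 \<xi> t v = (\<Sum>w<n. \<xi> w * unit_trajectory n ms w t v)"
proof (induct t arbitrary: v)
  case 0
  thus ?case by (simp add: unit_trajectory_def if_distrib cong: if_cong)
next
  case (Suc t)
  have "cont_proc n ms 0 \<xi> (Suc t) v =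
      (\<Sum>u<n. (\<Sum>w<n. \<xi> w * unit_trajectory n ms w t u) * matching_matrix (ms (Suc t)) u v)"
    by (simp add: cont_step_def Suc)
  also have "\<dots> = (\<Sum>w<n. \<Sum>u<n. \<xi> w * (unit_trajectory n ms w t u * matching_matrix (ms (Suc t)) u v))"
    by (subst sum.swap) (simp add: sum_distrib_right mult.assoc)
  also have "\<dots> = (\<Sum>w<n. \<xi> w * unit_trajectory n ms w (Suc t) v)"
    by (simp add: sum_distrib_left[symmetric] unit_trajectory_def cont_step_def)
  finally show ?case .
qed

context regular_connected_graph
begin

lemma sq_deviation_cont_step:
  "is_matching n E M \<Longrightarrow> sq_deviation n (cont_step n M x) = sq_deviation n x - matching_energy n M x / 4"
  using two_le_n by (simp add: sq_deviation_eq sum_cont_step sum_squares_cont_step)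

lemma cont_proc_const:
  assumes "\<And>i. 1 \<le> i \<Longrightarrow> i \<le> t \<Longrightarrow> is_matching n E (ms i)" and "v < n"
  shows "cont_proc n ms 0 (\<lambda>_. c) t v = c"
  using assms
proof (induct t arbitrary: v)
  case (Suc t)
  hence "is_matching n E (ms (Suc t))" and "\<And>u. u < n \<Longrightarrow> cont_proc n ms 0 (\<lambda>_. c) t u = c"
    by simp_all
  thus ?case using cont_step_matching(1) Suc.prems(2) by (simp cong: if_cong)
qed simp

lemma sum_unit_trajectories:
  assumes "\<And>i. 1 \<le> i \<Longrightarrow> i \<le> t \<Longrightarrow> is_matching n E (ms i)" and "v < n"
  shows "(\<Sum>w<n. unit_trajectory n ms w t v) = 1"
  using cont_proc_eq_sum_unit_trajectory[OF assms(2), of ms "\<lambda>_. 1" t] cont_proc_const[OF assms]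
  by simp

lemma sum_unit_trajectory:
  assumes "\<And>i. 1 \<le> i \<Longrightarrow> i \<le> t \<Longrightarrow> is_matching n E (ms i)" and "w < n"
  shows "(\<Sum>v<n. unit_trajectory n ms w t v) = 1"
  using assms(1)
proof (induct t)
  case 0
  thus ?case using assms(2) by (simp add: unit_trajectory_def)
next
  case (Suc t)
  thus ?case using sum_cont_step[of "ms (Suc t)"] by (simp add: unit_trajectory_def)
qed

lemma sum_abs_unit_trajectory_deviation_le:
  assumes ms: "\<And>i. 1 \<le> i \<Longrightarrow> i \<le> t \<Longrightarrow> is_matching n E (ms i)" and u: "u < n"
  shows "(\<Sum>w<n. \<bar>unit_trajectory n ms w t u - 1 / real n\<bar>)\<^sup>2 \<le> real n * potential n ms t"
proof -
  have "(\<Sum>w<n. (unit_trajectory n ms w t u - 1 / real n)\<^sup>2) \<le> potential n ms t"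
    unfolding potential_def
  proof (rule sum_mono)
    fix w assume w: "w \<in> {..<n}"
    have "(unit_trajectory n ms w t u - 1 / real n)\<^sup>2 \<le>
        (\<Sum>v<n. (unit_trajectory n ms w t v - 1 / real n)\<^sup>2)"
      using u by (intro member_le_sum) auto
    thus "(unit_trajectory n ms w t u - 1 / real n)\<^sup>2 \<le> sq_deviation n (unit_trajectory n ms w t)"
      using sum_unit_trajectory[OF ms] w unfolding sq_deviation_def sum_squares_def by simp
  qed
  hence "real n * (\<Sum>w<n. (unit_trajectory n ms w t u - 1 / real n)\<^sup>2) \<le> real n * potential n ms t"
    by (intro mult_left_mono) auto
  with sum_abs_squared_le[of "\<lambda>w. unit_trajectory n ms w t u - 1 / real n" n] show ?thesis
    by linarith
qed

text \<open>The columns of \<open>M\<^sup>(\<^sup>1\<^sup>) \<cdots> M\<^sup>(\<^sup>t\<^sup>)\<close> sum to 1, so a common shift \<open>c\<close> of the start vector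
  does not affect differences.\<close>

lemma cont_proc_diff_eq:
  assumes ms: "\<And>i. 1 \<le> i \<Longrightarrow> i \<le> t \<Longrightarrow> is_matching n E (ms i)" and u: "u < n" and v: "v < n"
  shows "cont_proc n ms 0 \<xi> t u - cont_proc n ms 0 \<xi> t v =
    (\<Sum>w<n. (\<xi> w - c) * (unit_trajectory n ms w t u - unit_trajectory n ms w t v))"
proof -
  have zero: "(\<Sum>w<n. c * (unit_trajectory n ms w t u - unit_trajectory n ms w t v)) = 0"
    using sum_unit_trajectories[OF ms u] sum_unit_trajectories[OF ms v]
    by (simp add: sum_distrib_left[symmetric] sum_subtractf)
  have "cont_proc n ms 0 \<xi> t u - cont_proc n ms 0 \<xi> t v =
      (\<Sum>w<n. \<xi> w * (unit_trajectory n ms w t u - unit_trajectory n ms w t v))"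
    unfolding cont_proc_eq_sum_unit_trajectory[OF u] cont_proc_eq_sum_unit_trajectory[OF v]
    by (simp add: sum_subtractf[symmetric] right_diff_distrib)
  also have "\<dots> = (\<Sum>w<n. \<xi> w * (unit_trajectory n ms w t u - unit_trajectory n ms w t v)) -
      (\<Sum>w<n. c * (unit_trajectory n ms w t u - unit_trajectory n ms w t v))"
    unfolding zero by simp
  also have "\<dots> = (\<Sum>w<n. (\<xi> w - c) * (unit_trajectory n ms w t u - unit_trajectory n ms w t v))"
    by (simp add: sum_subtractf[symmetric] left_diff_distrib)
  finally show ?thesis .
qed

lemma smoothing_if_potential_small:
  assumes ms: "\<And>i. 1 \<le> i \<Longrightarrow> i \<le> t \<Longrightarrow> is_matching n E (ms i)"
    and K: "K > 0" and eps: "\<epsilon> > 0"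
    and small: "potential n ms t \<le> \<epsilon>\<^sup>2 / (4 * K\<^sup>2 * real n)"
  shows "smoothing n ms 0 t K \<epsilon>"
proof -
  have n0: "n > 0" using two_le_n by simp
  define a where "a w u = unit_trajectory n ms w t u - 1 / real n" for w u
  have col_bound: "(\<Sum>w<n. \<bar>a w u\<bar>) \<le> \<epsilon> / (2 * K)" if u: "u < n" for u
  proof -
    have "(\<Sum>w<n. \<bar>a w u\<bar>)\<^sup>2 \<le> real n * (\<epsilon>\<^sup>2 / (4 * K\<^sup>2 * real n))"
      using sum_abs_unit_trajectory_deviation_le[where ms = ms and t = t, OF ms u]
        mult_left_mono[OF small, of "real n"]
      unfolding a_def by linarith
    also have "\<dots> = (\<epsilon> / (2 * K))\<^sup>2" using n0 K by (simp add: field_simps power2_eq_square)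
    finally show ?thesis by (rule power2_le_imp_le) (use eps K in simp)
  qed
  show ?thesis unfolding smoothing_def diff_zero
  proof (intro allI impI)
    fix \<xi> assume "discrepancy n \<xi> \<le> K"
    hence close: "\<And>p q. p < n \<Longrightarrow> q < n \<Longrightarrow> \<bar>\<xi> p - \<xi> q\<bar> \<le> K"
      using discrepancy_le_iff[OF n0] by blast
    show "discrepancy n (cont_proc n ms 0 \<xi> t) \<le> \<epsilon>"
      unfolding discrepancy_le_iff[OF n0]
    proof (intro allI impI)
      fix u v assume u: "u < n" and v: "v < n"
      have "cont_proc n ms 0 \<xi> t u - cont_proc n ms 0 \<xi> t v =
          (\<Sum>w<n. (\<xi> w - \<xi> 0) * (unit_trajectory n ms w t u - unit_trajectory n ms w t v))"
        using ms u v by (rule cont_proc_diff_eq)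
      hence "\<bar>cont_proc n ms 0 \<xi> t u - cont_proc n ms 0 \<xi> t v\<bar> =
          \<bar>\<Sum>w<n. (\<xi> w - \<xi> 0) * (a w u - a w v)\<bar>"
        unfolding a_def by simp
      also have "\<dots> \<le> (\<Sum>w<n. K * (\<bar>a w u\<bar> + \<bar>a w v\<bar>))"
      proof (rule order_trans[OF sum_abs sum_mono])
        fix w assume "w \<in> {..<n}"
        hence "\<bar>\<xi> w - \<xi> 0\<bar> \<le> K" using close n0 by simp
        thus "\<bar>(\<xi> w - \<xi> 0) * (a w u - a w v)\<bar> \<le> K * (\<bar>a w u\<bar> + \<bar>a w v\<bar>)"
          unfolding abs_mult by (intro mult_mono) (auto simp: abs_triangle_ineq4)
      qed
      also have "\<dots> = K * ((\<Sum>w<n. \<bar>a w u\<bar>) + (\<Sum>w<n. \<bar>a w v\<bar>))"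
        by (simp add: distrib_left sum.distrib sum_distrib_left)
      also have "\<dots> \<le> K * (\<epsilon> / (2 * K) + \<epsilon> / (2 * K))"
        using col_bound[OF u] col_bound[OF v] K by (intro mult_left_mono) auto
      also have "\<dots> = \<epsilon>" using K by (simp add: field_simps)
      finally show "\<bar>cont_proc n ms 0 \<xi> t u - cont_proc n ms 0 \<xi> t v\<bar> \<le> \<epsilon>" .
    qed
  qed
qed

end

section \<open>Random matchings\<close>

lemma power_one_minus_le_exp:
  fixes r :: real
  assumes "0 \<le> r" "r \<le> 1"
  shows "(1 - r) ^ t \<le> exp (- (r * real t))"
proof -
  have "(1 - r) ^ t \<le> exp (- r) ^ t"
    using assms exp_ge_add_one_self[of "- r"] by (intro power_mono) auto
  also have "\<dots> = exp (- (r * real t))" by (simp add: exp_of_nat_mult[symmetric] mult.commute)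
  finally show ?thesis .
qed

lemma exp_minus_two_ln:
  fixes z :: real
  assumes "z > 0"
  shows "exp (- (2 * ln z)) = 1 / z\<^sup>2"
proof -
  have "exp (2 * ln z) = z powr 2" using assms by (simp add: powr_def)
  also have "\<dots> = z\<^sup>2" using assms by (simp add: powr_numeral)
  finally show ?thesis by (simp add: exp_minus inverse_eq_divide)
qed

lemma expectation_Pi_pmf_insert:
  fixes h :: "('a \<Rightarrow> 'b) \<Rightarrow> real" and p :: "'a \<Rightarrow> 'b pmf"
  assumes A: "finite A" "x \<notin> A" and fin_x: "finite (set_pmf (p x))"
    and fin_A: "finite (set_pmf (Pi_pmf A dflt p))"
  shows "measure_pmf.expectation (Pi_pmf (insert x A) dflt p) h =
    measure_pmf.expectation (Pi_pmf A dflt p) (\<lambda>f. measure_pmf.expectation (p x) (\<lambda>y. h (f(x := y))))"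
proof -
  let ?Pi = "Pi_pmf A dflt p"
  let ?S = "set_pmf (p x)"
  have "measure_pmf.expectation (Pi_pmf (insert x A) dflt p) h =
      (\<Sum>y\<in>?S. pmf (p x) y *\<^sub>R measure_pmf.expectation (map_pmf (\<lambda>f. f(x := y)) ?Pi) h)"
    unfolding Pi_pmf_insert'[OF A] map_pmf_def[symmetric]
    by (rule pmf_expectation_bind[OF fin_x]) (use fin_A in auto)
  also have "\<dots> = (\<Sum>y\<in>?S. measure_pmf.expectation ?Pi (\<lambda>f. pmf (p x) y * h (f(x := y))))"
    by (simp add: integral_map_pmf)
  also have "\<dots> = measure_pmf.expectation ?Pi (\<lambda>f. \<Sum>y\<in>?S. pmf (p x) y * h (f(x := y)))"
    by (simp add: integral_sum integrable_measure_pmf_finite[OF fin_A])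
  also have "\<dots> = measure_pmf.expectation ?Pi (\<lambda>f. measure_pmf.expectation (p x) (\<lambda>y. h (f(x := y))))"
    by (intro Bochner_Integration.integral_cong refl) (simp add: integral_measure_pmf[OF fin_x])
  finally show ?thesis .
qed

locale random_matching_model = regular_connected_graph +
  fixes \<mu> :: "nat \<Rightarrow> nat set set pmf"
  assumes matchings: "\<And>t. t \<ge> 1 \<Longrightarrow> set_pmf (\<mu> t) \<subseteq> {M. is_matching n E M}"
    and p_min_pos: "p_min n E \<mu> > 0"
begin

abbreviation "pm \<equiv> p_min n E \<mu>"

definition decay_rate :: real where
  "decay_rate = pm * real d * (1 - lambda2 P)"

lemma decay_rate_pos: "decay_rate > 0"
  unfolding decay_rate_def using p_min_pos degree_pos lambda2_P_lt_one by simp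

lemma finite_set_pmf_round:
  assumes "t \<ge> 1"
  shows "finite (set_pmf (\<mu> t))"
proof -
  have "set_pmf (\<mu> t) \<subseteq> Pow (edge_set n E)" using matchings[OF assms] unfolding is_matching_def by auto
  thus ?thesis by (rule finite_subset) (simp add: finite_edge_set)
qed

lemma finite_set_Pi_pmf_rounds: "finite (set_pmf (Pi_pmf {1..t} {} \<mu>))"
  unfolding set_Pi_pmf[OF finite_atLeastAtMost]
  by (rule finite_PiE_dflt) (auto intro: finite_set_pmf_round)

lemma Pi_pmf_rounds_matching:
  "ms \<in> set_pmf (Pi_pmf {1..t} {} \<mu>) \<Longrightarrow> 1 \<le> i \<Longrightarrow> i \<le> t \<Longrightarrow> is_matching n E (ms i)"
  unfolding set_Pi_pmf[OF finite_atLeastAtMost] PiE_dflt_def using matchings by fastforce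

lemma p_min_le_edge_prob:
  assumes t: "t \<ge> 1" and e: "E v w"
  shows "pm \<le> measure_pmf.prob (\<mu> t) {M. {v, w} \<in> M}"
proof -
  have ee: "{v, w} \<in> edge_set n E" using e edge_less unfolding edge_set_def by blast
  define g where "g s = (INF e\<in>edge_set n E. measure_pmf.prob (\<mu> s) {M. e \<in> M})" for s
  have g0: "g s \<ge> 0" for s unfolding g_def using ee by (intro cINF_greatest) auto
  have "pm \<le> g t" unfolding p_min_def g_def[symmetric]
    by (rule cINF_lower) (use t g0 in \<open>auto intro!: bdd_belowI[of _ 0]\<close>)
  also have "g t \<le> measure_pmf.prob (\<mu> t) {M. {v, w} \<in> M}" unfolding g_def
    by (rule cINF_lower[OF _ ee]) (auto intro!: bdd_belowI[of _ 0])
  finally show ?thesis .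
qed

lemma expected_matching_energy_ge:
  assumes t: "t \<ge> 1"
  shows "measure_pmf.expectation (\<mu> t) (\<lambda>M. matching_energy n M x) \<ge> pm * graph_energy n E x"
proof -
  have int: "integrable (measure_pmf (\<mu> t)) f" for f :: "nat set set \<Rightarrow> real"
    by (rule integrable_measure_pmf_finite[OF finite_set_pmf_round[OF t]])
  have indicator: "(\<lambda>M. if {v, w} \<in> M then c else 0) = (\<lambda>M. c * indicator {M. {v, w} \<in> M} M)"
    for v w and c :: real
    by (auto simp: indicator_def)
  have "pm * graph_energy n E x = (\<Sum>v<n. \<Sum>w<n. if E v w then pm * (x v - x w)\<^sup>2 else 0)"
    unfolding graph_energy_def by (simp add: sum_distrib_left if_distrib cong: if_cong)
  also have "\<dots> \<le> (\<Sum>v<n. \<Sum>w<n. (x v - x w)\<^sup>2 * measure_pmf.prob (\<mu> t) {M. {v, w} \<in> M})"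
  proof (intro sum_mono)
    fix v w
    show "(if E v w then pm * (x v - x w)\<^sup>2 else 0) \<le>
      (x v - x w)\<^sup>2 * measure_pmf.prob (\<mu> t) {M. {v, w} \<in> M}"
    proof (cases "E v w")
      case True
      thus ?thesis using mult_right_mono[OF p_min_le_edge_prob[OF t True], of "(x v - x w)\<^sup>2"]
        by (simp add: mult.commute)
    qed simp
  qed
  also have "\<dots> = measure_pmf.expectation (\<mu> t) (\<lambda>M. matching_energy n M x)"
    unfolding matching_energy_def by (simp add: integral_sum int indicator)
  finally show ?thesis .
qed

lemma graph_energy_ge_sq_deviation:
  "graph_energy n E x \<ge> 4 * real d * (1 - lambda2 P) * sq_deviation n x"
proof -
  define y where "y v = x v - (\<Sum>u<n. x u) / real n" for v
  have cancel: "a - c - (b - c) = a - b" for a b c :: real by simp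
  have "graph_energy n E y = graph_energy n E x" unfolding graph_energy_def y_def cancel ..
  moreover have "(\<Sum>u<n. y u) = 0" unfolding y_def using two_le_n by (simp add: sum_subtractf)
  ultimately show ?thesis
    using graph_energy_ge_spectral_gap[of y] unfolding sq_deviation_def y_def by simp
qed

lemma expected_sq_deviation_cont_step:
  assumes t: "t \<ge> 1"
  shows "measure_pmf.expectation (\<mu> t) (\<lambda>M. sq_deviation n (cont_step n M x)) \<le>
    (1 - decay_rate) * sq_deviation n x"
proof -
  have int: "integrable (measure_pmf (\<mu> t)) f" for f :: "nat set set \<Rightarrow> real"
    by (rule integrable_measure_pmf_finite[OF finite_set_pmf_round[OF t]])
  have "measure_pmf.expectation (\<mu> t) (\<lambda>M. sq_deviation n (cont_step n M x)) =
      measure_pmf.expectation (\<mu> t) (\<lambda>M. sq_deviation n x - matching_energy n M x / 4)"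
    by (intro integral_cong_AE AE_pmfI) (use matchings[OF t] sq_deviation_cont_step in auto)
  also have "\<dots> = sq_deviation n x - measure_pmf.expectation (\<mu> t) (\<lambda>M. matching_energy n M x) / 4"
    by (simp add: int)
  also have "\<dots> \<le> sq_deviation n x - pm * (4 * real d * (1 - lambda2 P) * sq_deviation n x) / 4"
    using expected_matching_energy_ge[OF t, of x] graph_energy_ge_sq_deviation[of x] p_min_pos
    by (smt (verit, best) divide_right_mono mult_left_mono)
  also have "\<dots> = (1 - decay_rate) * sq_deviation n x" unfolding decay_rate_def by (simp add: field_simps)
  finally show ?thesis .
qed

lemma decay_rate_le_one: "decay_rate \<le> 1"
proof -
  define x where "x = (\<lambda>u::nat. if u = 0 then 1 else 0 :: real)"
  have pos: "sq_deviation n x > 0" unfolding x_def using sq_deviation_unit[of 0 n] two_le_n by simp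
  have "0 \<le> measure_pmf.expectation (\<mu> 1) (\<lambda>M. sq_deviation n (cont_step n M x))"
    by (rule integral_nonneg_AE) (simp add: sq_deviation_nonneg)
  also have "\<dots> \<le> (1 - decay_rate) * sq_deviation n x" by (rule expected_sq_deviation_cont_step) simp
  finally show ?thesis using pos by (simp add: zero_le_mult_iff)
qed

lemma potential_0: "potential n ms 0 = real n - 1"
proof -
  have "potential n ms 0 = (\<Sum>w<n. 1 - 1 / real n)"
    unfolding potential_def by (intro sum.cong refl) (simp add: unit_trajectory_def sq_deviation_unit)
  also have "\<dots> = real n - 1" using two_le_n by (simp add: field_simps)
  finally show ?thesis .
qed

text \<open>Since the rounds are independent, we may condition on the first \<open>t\<close> of them.\<close>

lemma expected_potential_Suc:
  "measure_pmf.expectation (Pi_pmf {1..Suc t} {} \<mu>) (\<lambda>ms. potential n ms (Suc t))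
    \<le> (1 - decay_rate) * measure_pmf.expectation (Pi_pmf {1..t} {} \<mu>) (\<lambda>ms. potential n ms t)"
proof -
  have ins: "{1..Suc t} = insert (Suc t) {1..t}" by auto
  have int_Pi: "integrable (measure_pmf (Pi_pmf {1..t} {} \<mu>)) f" for f :: "(nat \<Rightarrow> nat set set) \<Rightarrow> real"
    by (rule integrable_measure_pmf_finite[OF finite_set_Pi_pmf_rounds])
  have int_round: "integrable (measure_pmf (\<mu> (Suc t))) f" for f :: "nat set set \<Rightarrow> real"
    by (rule integrable_measure_pmf_finite[OF finite_set_pmf_round]) simp
  have "measure_pmf.expectation (Pi_pmf {1..Suc t} {} \<mu>) (\<lambda>ms. potential n ms (Suc t)) =
    measure_pmf.expectation (Pi_pmf {1..t} {} \<mu>)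
      (\<lambda>ms. measure_pmf.expectation (\<mu> (Suc t)) (\<lambda>M. potential n (ms(Suc t := M)) (Suc t)))"
    unfolding ins
    by (rule expectation_Pi_pmf_insert[OF _ _ finite_set_pmf_round finite_set_Pi_pmf_rounds]) auto
  also have "\<dots> \<le> measure_pmf.expectation (Pi_pmf {1..t} {} \<mu>) (\<lambda>ms. (1 - decay_rate) * potential n ms t)"
  proof (rule integral_mono[OF int_Pi int_Pi])
    fix ms :: "nat \<Rightarrow> nat set set"
    have traj: "unit_trajectory n (ms(Suc t := M)) w (Suc t) = cont_step n M (unit_trajectory n ms w t)"
      for M w
      using cont_proc_cong[of t "ms(Suc t := M)" ms] unfolding unit_trajectory_def by simp
    have "measure_pmf.expectation (\<mu> (Suc t)) (\<lambda>M. potential n (ms(Suc t := M)) (Suc t)) =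
        (\<Sum>w<n. measure_pmf.expectation (\<mu> (Suc t)) (\<lambda>M. sq_deviation n (cont_step n M (unit_trajectory n ms w t))))"
      unfolding potential_def traj by (simp add: integral_sum int_round)
    also have "\<dots> \<le> (\<Sum>w<n. (1 - decay_rate) * sq_deviation n (unit_trajectory n ms w t))"
      by (intro sum_mono expected_sq_deviation_cont_step) simp
    also have "\<dots> = (1 - decay_rate) * potential n ms t" unfolding potential_def by (simp add: sum_distrib_left)
    finally show "measure_pmf.expectation (\<mu> (Suc t)) (\<lambda>M. potential n (ms(Suc t := M)) (Suc t)) \<le>
      (1 - decay_rate) * potential n ms t" .
  qed
  also have "\<dots> = (1 - decay_rate) * measure_pmf.expectation (Pi_pmf {1..t} {} \<mu>) (\<lambda>ms. potential n ms t)"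
    by simp
  finally show ?thesis .
qed

lemma expected_potential:
  "measure_pmf.expectation (Pi_pmf {1..t} {} \<mu>) (\<lambda>ms. potential n ms t) \<le> (1 - decay_rate) ^ t * (real n - 1)"
proof (induct t)
  case 0
  show ?case by (simp add: potential_0)
next
  case (Suc t)
  have "measure_pmf.expectation (Pi_pmf {1..Suc t} {} \<mu>) (\<lambda>ms. potential n ms (Suc t))
    \<le> (1 - decay_rate) * measure_pmf.expectation (Pi_pmf {1..t} {} \<mu>) (\<lambda>ms. potential n ms t)"
    by (rule expected_potential_Suc)
  also have "\<dots> \<le> (1 - decay_rate) * ((1 - decay_rate) ^ t * (real n - 1))"
    using Suc decay_rate_le_one by (intro mult_left_mono) auto
  finally show ?case by simp
qed

lemma smoothing_prob_ge:
  assumes eps: "0 < \<epsilon>" and K: "0 < K"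
  shows "smoothing_prob n \<mu> t K \<epsilon> \<ge> 1 - (1 - decay_rate) ^ t * (real n - 1) * (4 * K\<^sup>2 * real n / \<epsilon>\<^sup>2)"
proof -
  define Q where "Q = Pi_pmf {1..t} {} \<mu>"
  define \<delta> where "\<delta> = \<epsilon>\<^sup>2 / (4 * K\<^sup>2 * real n)"
  have \<delta>: "\<delta> > 0" unfolding \<delta>_def using eps K two_le_n by simp
  define A where "A = {ms. smoothing n ms 0 t K \<epsilon>}"
  have "(UNIV - A) \<inter> set_pmf Q \<subseteq> {ms. \<delta> \<le> potential n ms t}"
  proof
    fix ms assume ms: "ms \<in> (UNIV - A) \<inter> set_pmf Q"
    show "ms \<in> {ms. \<delta> \<le> potential n ms t}"
    proof (rule ccontr)
      assume "ms \<notin> {ms. \<delta> \<le> potential n ms t}"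
      hence "potential n ms t \<le> \<epsilon>\<^sup>2 / (4 * K\<^sup>2 * real n)" unfolding \<delta>_def by simp
      moreover have "\<And>i. 1 \<le> i \<Longrightarrow> i \<le> t \<Longrightarrow> is_matching n E (ms i)"
        using Pi_pmf_rounds_matching ms unfolding Q_def by blast
      ultimately have "smoothing n ms 0 t K \<epsilon>" using smoothing_if_potential_small K eps by blast
      thus False using ms unfolding A_def by simp
    qed
  qed
  hence "measure_pmf.prob Q (UNIV - A) \<le> measure_pmf.prob Q {ms. \<delta> \<le> potential n ms t}"
    by (subst measure_Int_set_pmf[symmetric]) (intro measure_pmf.finite_measure_mono, auto)
  also have "\<dots> \<le> measure_pmf.expectation Q (\<lambda>ms. potential n ms t) / \<delta>"
  proof -
    have "integrable (measure_pmf Q) (\<lambda>ms. potential n ms t)"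
      unfolding Q_def by (rule integrable_measure_pmf_finite[OF finite_set_Pi_pmf_rounds])
    hence "measure_pmf.prob Q {ms \<in> space (measure_pmf Q). \<delta> \<le> potential n ms t} \<le>
        measure_pmf.expectation Q (\<lambda>ms. potential n ms t) / \<delta>"
      by (rule integral_Markov_inequality_measure) (auto simp: potential_nonneg \<delta>)
    thus ?thesis by simp
  qed
  also have "\<dots> \<le> (1 - decay_rate) ^ t * (real n - 1) / \<delta>"
    using expected_potential[of t] \<delta> unfolding Q_def by (simp add: divide_right_mono)
  finally have "measure_pmf.prob Q (UNIV - A) \<le> (1 - decay_rate) ^ t * (real n - 1) * (4 * K\<^sup>2 * real n / \<epsilon>\<^sup>2)"
    unfolding \<delta>_def by (simp add: field_simps)
  moreover have "measure_pmf.prob Q (UNIV - A) = 1 - measure_pmf.prob Q A"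
    using measure_pmf.prob_compl[of A Q] by simp
  ultimately show ?thesis unfolding smoothing_prob_def Q_def A_def by simp
qed

lemma eight_le_smoothing_ratio:
  assumes eps: "0 < \<epsilon>" and eK: "\<epsilon> \<le> K"
  shows "8 \<le> K * real n ^ 2 / (\<epsilon> / 2)"
proof -
  have n: "real n \<ge> 2" using two_le_n by simp
  have "\<epsilon> * 4 \<le> K * real n ^ 2"
    using eK eps power_mono[OF n, of 2] by (intro mult_mono) auto
  thus ?thesis using eps by (simp add: le_divide_eq)
qed

lemma one_le_ln_smoothing_ratio:
  assumes "0 < \<epsilon>" and "\<epsilon> \<le> K"
  shows "1 \<le> ln (K * real n ^ 2 / (\<epsilon> / 2))"
  using eight_le_smoothing_ratio[OF assms] exp_le by (subst ln_ge_iff) auto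

lemma log_time_le:
  assumes L: "1 \<le> L"
  shows "real (nat \<lceil>2 * L / decay_rate\<rceil>) \<le> 8 / (real d * pm) * (1 / (1 - lambda2 P)) * L"
proof -
  have r: "0 < decay_rate" "decay_rate \<le> 1" using decay_rate_pos decay_rate_le_one by auto
  have "real (nat \<lceil>2 * L / decay_rate\<rceil>) \<le> 2 * L / decay_rate + 1"
    using L r ceiling_correct[of "2 * L / decay_rate"] by (simp add: of_nat_nat)
  also have "\<dots> \<le> 8 * L / decay_rate" using L r by (simp add: field_simps)
  also have "\<dots> = 8 / (real d * pm) * (1 / (1 - lambda2 P)) * L"
    unfolding decay_rate_def using degree_pos p_min_pos lambda2_P_lt_one by (simp add: field_simps)
  finally show ?thesis .
qed

lemma smoothing_prob_at_log_time:
  assumes eps: "0 < \<epsilon>" and eK: "\<epsilon> \<le> K"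
  defines "L \<equiv> ln (K * real n ^ 2 / (\<epsilon> / 2))"
  shows "smoothing_prob n \<mu> (nat \<lceil>2 * L / decay_rate\<rceil>) K \<epsilon> \<ge> 1 - 1 / real n"
proof -
  define Z where "Z = K * real n ^ 2 / (\<epsilon> / 2)"
  define t where "t = nat \<lceil>2 * L / decay_rate\<rceil>"
  have K: "K > 0" using eps eK by simp
  have n: "real n \<ge> 2" using two_le_n by simp
  have Z: "Z > 0" using eight_le_smoothing_ratio[OF eps eK] unfolding Z_def by simp
  have r: "0 < decay_rate" "decay_rate \<le> 1" using decay_rate_pos decay_rate_le_one by auto
  have "(1 - decay_rate) ^ t \<le> exp (- (decay_rate * real t))"
    by (rule power_one_minus_le_exp) (use r in auto)
  also have "\<dots> \<le> exp (- (2 * L))"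
    using mult_left_mono[OF real_nat_ceiling_ge[of "2 * L / decay_rate"], of decay_rate] r
    unfolding t_def by simp
  also have "\<dots> = 1 / Z\<^sup>2" unfolding L_def Z_def[symmetric] using Z by (rule exp_minus_two_ln)
  finally have "(1 - decay_rate) ^ t * (real n - 1) * (4 * K\<^sup>2 * real n / \<epsilon>\<^sup>2) \<le>
      1 / Z\<^sup>2 * (real n - 1) * (4 * K\<^sup>2 * real n / \<epsilon>\<^sup>2)"
    using n by (intro mult_right_mono) auto
  also have "\<dots> = (real n - 1) / real n ^ 3"
    unfolding Z_def using eps K n by (simp add: field_simps power2_eq_square power3_eq_cube)
  also have "\<dots> \<le> real n ^ 2 / real n ^ 3"
  proof (rule divide_right_mono)
    have "real n * 1 \<le> real n * real n" using n by (intro mult_left_mono) auto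
    thus "real n - 1 \<le> real n ^ 2" by (simp add: power2_eq_square)
  qed simp
  also have "\<dots> = 1 / real n" using n by (simp add: power2_eq_square power3_eq_cube)
  finally show ?thesis using smoothing_prob_ge[OF eps K, of t] unfolding t_def by linarith
qed

end

lemma single_node_degree_0:
  assumes "simple_graph 1 E" and "regular_graph 1 E d"
  shows "d = 0"
proof -
  have "{v. v < 1 \<and> E 0 v} = {}" using assms(1) unfolding simple_graph_def by auto
  hence "graph_deg 1 E 0 = 0" unfolding graph_deg_def by simp
  thus ?thesis using assms(2) unfolding regular_graph_def by simp
qed

text \<open>On a single node the required probability is \<open>1 - 1/1 = 0\<close>, so no round is needed.\<close>

lemma tau_cont_single_node: "smoothing_prob 1 \<mu> 0 K \<epsilon> \<ge> 1 - 1 / real 1" "tau_cont 1 \<mu> K \<epsilon> = 0"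
proof -
  show round_0: "smoothing_prob 1 \<mu> 0 K \<epsilon> \<ge> 1 - 1 / real 1" by (simp add: smoothing_prob_def)
  show "tau_cont 1 \<mu> K \<epsilon> = 0" unfolding tau_cont_def using round_0 by (simp add: Least_eq_0)
qed

theorem theorem2p5:
  fixes n d :: nat and E :: "nat \<Rightarrow> nat \<Rightarrow> bool"
    and \<mu> :: "nat \<Rightarrow> nat set set pmf" and K \<epsilon> :: real
  assumes "simple_graph n E" and "connected_graph n E" and "regular_graph n E d"
    and "\<And>t. t \<ge> 1 \<Longrightarrow> set_pmf (\<mu> t) \<subseteq> {M. is_matching n E M}"
    and "p_min n E \<mu> > 0"
    and "0 < \<epsilon>" and "\<epsilon> \<le> K"
  shows "(\<exists>t. smoothing_prob n \<mu> t K \<epsilon> \<ge> 1 - 1 / real n) \<and>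
    real (tau_cont n \<mu> K \<epsilon>) \<le>
      8 / (real d * p_min n E \<mu>) * (1 / (1 - lambda2 (P_mat n E)))
        * ln (K * real n ^ 2 / (\<epsilon> / 2))"
proof (cases "n = 1")
  case True
  \<comment> \<open>Then \<open>d = 0\<close>, and the bound \<open>8 / 0 * \<dots>\<close> is 0 by the convention \<open>x / 0 = 0\<close>.\<close>
  have "d = 0" using single_node_degree_0 assms(1,3) unfolding True .
  with tau_cont_single_node[of \<mu> K \<epsilon>] show ?thesis unfolding True by auto
next
  case False
  hence "n \<ge> 2" using assms(2) unfolding connected_graph_def by simp
  with assms interpret random_matching_model n E d \<mu>
    by unfold_locales auto
  define t where "t = nat \<lceil>2 * ln (K * real n ^ 2 / (\<epsilon> / 2)) / decay_rate\<rceil>"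
  have smooth: "smoothing_prob n \<mu> t K \<epsilon> \<ge> 1 - 1 / real n"
    unfolding t_def by (rule smoothing_prob_at_log_time[OF assms(6,7)])
  moreover have "tau_cont n \<mu> K \<epsilon> \<le> t"
    unfolding tau_cont_def by (rule Least_le) (rule smooth)
  moreover have "real t \<le> 8 / (real d * p_min n E \<mu>) * (1 / (1 - lambda2 (P_mat n E)))
      * ln (K * real n ^ 2 / (\<epsilon> / 2))"
    unfolding t_def by (rule log_time_le[OF one_le_ln_smoothing_ratio[OF assms(6,7)]])
  ultimately show ?thesis by force
qed

end
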